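(* Let $\delta(n)=o(n)$. For every $\delta(n)$-random labeled graph $G$ on $n$ nodes, without relabeling (model $\alpha$; this holds even if nodes know their neighbours and ports may be reassigned), in every full-information shortest path routing scheme on $G$ the local routing function at every node occupies at least $n^2/4-o(n^2)$ bits; hence the complete scheme requires at least $n^3/4-o(n^3)$ bits.
   Context: $C(x\mid y)$ is Kolmogorov complexity w.r.t. a fixed universal Turing machine; $\log$ is base 2. A labeled graph $G$ on $V=\{1,\dots,n\}$ is encoded by $E(G)\in\{0,1\}^{n(n-1)/2}$ (bit $i$ indicates the $i$-th possible edge in lexicographic order); with $\mathcal G$ the set of all labeled graphs on $V$, $G$ is $\delta(n)$-random if $C(E(G)\mid n,\delta,\mathcal G)\ge n(n-1)/2-\delta(n)$. A full-information shortest path routing scheme has at each node $u$ a local routing function that, for each destination $v\ne u$, returns the set of all edges at $u$ lying on some shortest path from $u$ to $v$. Model $\alpha$: nodes keep their labels $1,\dots,n$. *)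

theory Defs
  imports Main "HOL-Library.Landau_Symbols"
begin

datatype recf = Z | S | Id nat | Cn recf "recf list" | Pr recf recf | Mn recf

text \<open>Big-step semantics (deterministic); unused extra arguments are ignored.\<close>
inductive eval :: "recf \<Rightarrow> nat list \<Rightarrow> nat \<Rightarrow> bool" where
  ev_Z: "eval Z xs 0"
| ev_S: "eval S (x # xs) (Suc x)"
| ev_Id: "i < length xs \<Longrightarrow> eval (Id i) xs (xs ! i)"
| ev_Cn: "list_all2 (\<lambda>g y. eval g xs y) gs ys \<Longrightarrow> eval f ys z \<Longrightarrow> eval (Cn f gs) xs z"
| ev_Pr0: "eval g xs y \<Longrightarrow> eval (Pr g h) (0 # xs) y"
| ev_PrS: "eval (Pr g h) (k # xs) y \<Longrightarrow> eval h (y # k # xs) z \<Longrightarrow> eval (Pr g h) (Suc k # xs) z"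
| ev_Mn: "eval f (k # xs) 0 \<Longrightarrow> (\<forall>j<k. \<exists>y. eval f (j # xs) (Suc y)) \<Longrightarrow> eval (Mn f) xs k"
monos list.rel_mono

text \<open>Bijective base-2 numbering of binary strings.\<close>
definition bcode :: "bool list \<Rightarrow> nat" where
  "bcode xs = foldr (\<lambda>b m. 2 * m + 1 + (if b then 1 else 0)) xs 0"

definition partrec2 :: "(bool list \<Rightarrow> bool list \<Rightarrow> bool list option) \<Rightarrow> bool" where
  "partrec2 \<phi> \<longleftrightarrow> (\<exists>f. \<forall>p y z. \<phi> p y = Some z \<longleftrightarrow> eval f [bcode p, bcode y] (bcode z))"

definition universal :: "(bool list \<Rightarrow> bool list \<Rightarrow> bool list option) \<Rightarrow> bool" where
  "universal U \<longleftrightarrow> partrec2 U \<and>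
     (\<forall>\<phi>. partrec2 \<phi> \<longrightarrow> (\<exists>c. \<forall>p y x. \<phi> p y = Some x \<longrightarrow>
         (\<exists>q. U q y = Some x \<and> length q \<le> length p + c)))"

definition KC :: "(bool list \<Rightarrow> bool list \<Rightarrow> bool list option) \<Rightarrow> bool list \<Rightarrow> bool list \<Rightarrow> nat" where
  "KC U x y = (LEAST m. \<exists>p. length p = m \<and> U p y = Some x)"

text \<open>Self-delimiting encoding of a tuple of strings as one string; unary numbers.\<close>
definition tuple_enc :: "bool list list \<Rightarrow> bool list" where
  "tuple_enc xss = concat (map (\<lambda>xs. concat (map (\<lambda>b. [True, b]) xs) @ [False, False]) xss)"

definition unary :: "nat \<Rightarrow> bool list" where
  "unary n = replicate n True"

text \<open>A labeled graph is its set of edges, each edge (i,j) stored with i < j.\<close>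
type_synonym graph = "(nat \<times> nat) set"

definition labeled_graph :: "nat \<Rightarrow> graph \<Rightarrow> bool" where
  "labeled_graph n G \<longleftrightarrow> G \<subseteq> {(i, j). 1 \<le> i \<and> i < j \<and> j \<le> n}"

definition pairs_lex :: "nat \<Rightarrow> (nat \<times> nat) list" where
  "pairs_lex n = concat (map (\<lambda>i. map (\<lambda>j. (i, j)) [i+1..<n+1]) [1..<n+1])"

definition E :: "nat \<Rightarrow> graph \<Rightarrow> bool list" where
  "E n G = map (\<lambda>e. e \<in> G) (pairs_lex n)"

definition adj :: "graph \<Rightarrow> nat \<Rightarrow> nat \<Rightarrow> bool" where
  "adj G u v \<longleftrightarrow> (u, v) \<in> G \<or> (v, u) \<in> G"

definition nbrs :: "graph \<Rightarrow> nat \<Rightarrow> nat set" where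
  "nbrs G u = {w. adj G u w}"

definition random_graph :: "(bool list \<Rightarrow> bool list \<Rightarrow> bool list option) \<Rightarrow> (nat \<Rightarrow> real) \<Rightarrow> nat \<Rightarrow> graph \<Rightarrow> bool" where
  "random_graph U \<delta> n G \<longleftrightarrow> labeled_graph n G \<and>
     real (KC U (E n G) (unary n)) \<ge> real (n * (n - 1) div 2) - \<delta> n"

definition adjrel :: "graph \<Rightarrow> (nat \<times> nat) set" where
  "adjrel G = {(u, v). adj G u v}"

text \<open>The edge uw lies on some shortest path from u to v: there is a walk of length k+1
  from u to v starting with uw, and no walk from u to v of length at most k.\<close>
definition on_shortest_path :: "graph \<Rightarrow> nat \<Rightarrow> nat \<Rightarrow> nat \<Rightarrow> bool" where
  "on_shortest_path G u v w \<longleftrightarrow> adj G u w \<and>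
     (\<exists>k. (w, v) \<in> adjrel G ^^ k \<and> (\<forall>j\<le>k. (u, v) \<notin> adjrel G ^^ j))"

text \<open>R u v is the set of edges at u (each edge uw represented by the label w of its other
  endpoint) lying on some shortest path from u to v.\<close>
definition full_info_sp_scheme :: "nat \<Rightarrow> graph \<Rightarrow> (nat \<Rightarrow> nat \<Rightarrow> nat set) \<Rightarrow> bool" where
  "full_info_sp_scheme n G R \<longleftrightarrow>
     (\<forall>u\<in>{1..n}. \<forall>v\<in>{1..n}. v \<noteq> u \<longrightarrow> R u v = {w. on_shortest_path G u v w})"

definition rt_table :: "nat \<Rightarrow> (nat \<Rightarrow> nat \<Rightarrow> nat set) \<Rightarrow> nat \<Rightarrow> bool list" where
  "rt_table n R u = concat (map (\<lambda>v. map (\<lambda>w. w \<in> R u v) [1..<n+1]) (filter (\<lambda>v. v \<noteq> u) [1..<n+1]))"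

text \<open>Table of the local routing function at u when the edges at u are named by
  ports 0..d-1 via the port assignment pi (d = degree of u).\<close>
definition port_table :: "nat \<Rightarrow> (nat \<Rightarrow> nat \<Rightarrow> nat set) \<Rightarrow> nat \<Rightarrow> nat \<Rightarrow> (nat \<Rightarrow> nat) \<Rightarrow> bool list" where
  "port_table n R u d \<pi> = concat (map (\<lambda>v. map (\<lambda>i. \<pi> i \<in> R u v) [0..<d]) (filter (\<lambda>v. v \<noteq> u) [1..<n+1]))"

text \<open>What node u knows for free: n, its own label, and its neighbours.\<close>
definition node_info :: "nat \<Rightarrow> graph \<Rightarrow> nat \<Rightarrow> bool list" where
  "node_info n G u = tuple_enc [unary n, unary u, map (\<lambda>w. adj G u w) [1..<n+1]]"

end

theory Submission
  imports Defs "HOL-Probability.Hoeffding" "HOL-Real_Asymp.Real_Asymp"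
begin

text \<open>
  A \<open>\<delta>(n)\<close>-random graph \<open>G\<close> has no description, given \<open>n\<close>, shorter than \<open>n(n-1)/2 - \<delta>(n)\<close> bits.
  Two descriptions of \<open>G\<close> relative to a node \<open>u\<close> of degree \<open>d\<close> turn this into the bound.

  First, \<open>G\<close> is determined by \<open>u\<close>, \<open>d\<close>, the index of the adjacency row of \<open>u\<close> among the
  \<open>(n-1 choose d)\<close> strings of weight \<open>d\<close>, and the edges not at \<open>u\<close>. Hence
  \<open>log (n-1 choose d) \<ge> n - 1 - o(n)\<close>, and a Chernoff bound gives \<open>d = (n-1)/2 \<plusminus> o(n)\<close>.

  Second, a node \<open>v \<noteq> u\<close> not adjacent to \<open>u\<close> is adjacent to a neighbour \<open>w\<close> of \<open>u\<close> iff \<open>v\<close> is at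
  distance 2 from \<open>u\<close> and the edge \<open>uw\<close> lies on a shortest path from \<open>u\<close> to \<open>v\<close>, i.e. iff \<open>w\<close> is in the
  full-information routing function at \<open>u\<close> for destination \<open>v\<close>. So \<open>G\<close> is determined by \<open>u\<close>, its
  adjacency row, the set of nodes at distance 2, the order in which the table lists the edges at \<open>u\<close>,
  the edges not between \<open>N(u)\<close> and its complement, and a program for the routing table at \<open>u\<close>
  given what \<open>u\<close> knows. The \<open>d (n - 1 - d) \<ge> n\<^sup>2/4 - o(n\<^sup>2)\<close> omitted edges force that program to have
  length at least \<open>n\<^sup>2/4 - o(n\<^sup>2)\<close>.

  The decoders are partial recursive functions on the binary codes of strings, so the
  universality of \<open>U\<close> turns both descriptions into upper bounds on Kolmogorov complexity.
\<close>

section \<open>Computable functions\<close>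

lemma eval_deterministic: "eval f xs y \<Longrightarrow> eval f xs y' \<Longrightarrow> y = y'"
proof (induction arbitrary: y' rule: eval.induct)
  case (ev_Cn xs gs ys f z)
  from ev_Cn.prems obtain ys' where ys': "list_all2 (\<lambda>g y. eval g xs y) gs ys'" "eval f ys' y'"
    by (cases rule: eval.cases) auto
  have "ys = ys'" using ev_Cn(1) ys'(1)
    by (induction gs ys arbitrary: ys' rule: list_all2_induct) (auto simp: list_all2_Cons1)
  with ev_Cn ys' show ?case by auto
next
  case (ev_Mn f k xs)
  from ev_Mn.prems obtain k' where k': "y' = k'" "eval f (k' # xs) 0" "\<forall>j<k'. \<exists>y. eval f (j # xs) (Suc y)"
    by (cases rule: eval.cases) auto
  show ?case
  proof (rule linorder_cases[of k k'])
    assume "k < k'"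
    then obtain y where "eval f (k # xs) (Suc y)" using k' by auto
    with ev_Mn.IH(1) show ?thesis by fastforce
  next
    assume "k' < k"
    then obtain y where "eval f (k' # xs) (Suc y)" "\<forall>y''. eval f (k' # xs) y'' \<longrightarrow> Suc y = y''"
      using ev_Mn.IH(2) by blast
    with k' show ?thesis by fastforce
  qed (use k' in simp)
next
  case (ev_Pr0 g xs y h)
  from ev_Pr0.prems show ?case by (cases rule: eval.cases) (use ev_Pr0 in auto)
next
  case (ev_PrS g h k xs y z)
  from ev_PrS.prems show ?case by (cases rule: eval.cases) (use ev_PrS in auto)
qed (auto elim: eval.cases)

definition computable :: "nat \<Rightarrow> (nat list \<Rightarrow> nat) \<Rightarrow> bool" where
  "computable k f \<longleftrightarrow> (\<exists>r. \<forall>xs. length xs = k \<longrightarrow> eval r xs (f xs))"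

definition computable_list :: "nat \<Rightarrow> nat \<Rightarrow> (nat list \<Rightarrow> nat list) \<Rightarrow> bool" where
  "computable_list k m F \<longleftrightarrow> (\<exists>rs. length rs = m \<and>
     (\<forall>xs. length xs = k \<longrightarrow> list_all2 (\<lambda>r y. eval r xs y) rs (F xs)))"

definition decidable :: "nat \<Rightarrow> (nat list \<Rightarrow> bool) \<Rightarrow> bool" where
  "decidable k P \<longleftrightarrow> computable k (\<lambda>xs. if P xs then 1 else 0)"

named_theorems computable_intros

lemma computable_cong: "computable k f \<Longrightarrow> (\<And>xs. length xs = k \<Longrightarrow> f xs = g xs) \<Longrightarrow> computable k g"
  unfolding computable_def by auto

lemma computable_nth: "i < k \<Longrightarrow> computable k (\<lambda>xs. xs ! i)"
  unfolding computable_def by (rule exI[of _ "Id i"]) (auto intro: eval.intros)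

fun const_recf :: "nat \<Rightarrow> recf" where
  "const_recf 0 = Z"
| "const_recf (Suc c) = Cn S [const_recf c]"

lemma eval_const_recf: "eval (const_recf c) xs c"
  by (induction c) (auto intro!: eval.intros)

lemma computable_const[computable_intros]: "computable k (\<lambda>xs. c)"
  unfolding computable_def by (rule exI[of _ "const_recf c"]) (auto intro: eval_const_recf)

lemma computable_Suc[computable_intros]: "computable k f \<Longrightarrow> computable k (\<lambda>xs. Suc (f xs))"
  unfolding computable_def
  by (metis (no_types, lifting) ev_Cn ev_S list.rel_inject(2) list_all2_Nil)

lemma computable_compose: "computable m F \<Longrightarrow> computable_list k m A \<Longrightarrow> computable k (\<lambda>xs. F (A xs))"
  unfolding computable_def computable_list_def
proof (elim exE conjE)
  fix r rs
  assume r: "\<forall>xs. length xs = m \<longrightarrow> eval r xs (F xs)"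
    and rs: "length rs = m" "\<forall>xs. length xs = k \<longrightarrow> list_all2 (\<lambda>r y. eval r xs y) rs (A xs)"
  show "\<exists>r. \<forall>xs. length xs = k \<longrightarrow> eval r xs (F (A xs))"
  proof (rule exI[of _ "Cn r rs"], intro allI impI)
    fix xs :: "nat list" assume "length xs = k"
    with rs have l: "list_all2 (\<lambda>r y. eval r xs y) rs (A xs)" by auto
    hence "length (A xs) = m" using rs(1) list_all2_lengthD by fastforce
    with r l show "eval (Cn r rs) xs (F (A xs))" by (auto intro: ev_Cn)
  qed
qed

lemma computable_list_Nil: "computable_list k 0 (\<lambda>xs. [])"
  unfolding computable_list_def by auto

lemma computable_list_Cons:
  "computable k f \<Longrightarrow> computable_list k m A \<Longrightarrow> computable_list k (Suc m) (\<lambda>xs. f xs # A xs)"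
  unfolding computable_list_def computable_def
proof (elim exE conjE)
  fix r rs assume r: "\<forall>xs. length xs = k \<longrightarrow> eval r xs (f xs)"
    and rs: "length rs = m" "\<forall>xs. length xs = k \<longrightarrow> list_all2 (\<lambda>r y. eval r xs y) rs (A xs)"
  show "\<exists>rs. length rs = Suc m \<and> (\<forall>xs. length xs = k \<longrightarrow> list_all2 (\<lambda>r y. eval r xs y) rs (f xs # A xs))"
    by (rule exI[of _ "r # rs"]) (use r rs in auto)
qed

lemma computable_list_drop: "k = m + j \<Longrightarrow> computable_list k j (\<lambda>xs. drop m xs)"
  unfolding computable_list_def
  by (rule exI[of _ "map Id [m..<k]"]) (auto simp: list_all2_conv_all_nth intro: ev_Id)

lemma computable_drop: "computable k f \<Longrightarrow> k' = m + k \<Longrightarrow> computable k' (\<lambda>ys. f (drop m ys))"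
  by (rule computable_compose[OF _ computable_list_drop]) auto

lemma computable_compose1:
  "computable 1 (\<lambda>ys. F (ys!0)) \<Longrightarrow> computable k a \<Longrightarrow> computable k (\<lambda>xs. F (a xs))"
  using computable_compose[of 1 "\<lambda>ys. F (ys!0)" k "\<lambda>xs. [a xs]"]
    computable_list_Cons[OF _ computable_list_Nil] by simp

lemma computable_compose2:
  "computable 2 (\<lambda>ys. F (ys!0) (ys!1)) \<Longrightarrow> computable k a \<Longrightarrow> computable k b \<Longrightarrow>
   computable k (\<lambda>xs. F (a xs) (b xs))"
  using computable_compose[of 2 "\<lambda>ys. F (ys!0) (ys!1)" k "\<lambda>xs. [a xs, b xs]"]
    computable_list_Cons[OF _ computable_list_Cons[OF _ computable_list_Nil]]
  by (simp add: numeral_2_eq_2)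

lemma computable_compose3:
  "computable 3 (\<lambda>ys. F (ys!0) (ys!1) (ys!2)) \<Longrightarrow> computable k a \<Longrightarrow> computable k b \<Longrightarrow>
   computable k c \<Longrightarrow> computable k (\<lambda>xs. F (a xs) (b xs) (c xs))"
  using computable_compose[of 3 "\<lambda>ys. F (ys!0) (ys!1) (ys!2)" k "\<lambda>xs. [a xs, b xs, c xs]"]
    computable_list_Cons[OF _ computable_list_Cons[OF _ computable_list_Cons[OF _ computable_list_Nil]]]
  by (simp add: numeral_3_eq_3)

text \<open>Iterations pass their bound variables as extra leading arguments; these rules let the closure
  rules look through that calling convention.\<close>

lemma computable_bind1:
  assumes "computable (Suc k) (\<lambda>ys. g (ys!0) (drop 1 ys))" "computable k' a" "computable_list k' k A"
  shows "computable k' (\<lambda>zs. g (a zs) (A zs))"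
  using computable_compose[OF assms(1) computable_list_Cons[OF assms(2,3)]] by simp

lemma computable_bind2:
  assumes "computable (Suc (Suc k)) (\<lambda>ys. g (ys!0) (ys!1) (drop 2 ys))" "computable k' a"
    "computable k' b" "computable_list k' k A"
  shows "computable k' (\<lambda>zs. g (a zs) (b zs) (A zs))"
  using computable_compose[OF assms(1) computable_list_Cons[OF assms(2) computable_list_Cons[OF assms(3,4)]]]
  by simp

lemma decidable_bind1:
  assumes "decidable (Suc k) (\<lambda>ys. P (ys!0) (drop 1 ys))" "computable k' a" "computable_list k' k A"
  shows "decidable k' (\<lambda>zs. P (a zs) (A zs))"
  using assms computable_bind1[where g="\<lambda>a b. if P a b then 1 else 0"] unfolding decidable_def by blast

lemma computable_nth_drop[computable_intros]: "m + i < k \<Longrightarrow> computable k (\<lambda>ys. drop m ys ! i)"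
  by (rule computable_cong[OF computable_nth[of "m+i" k]]) auto

lemma computable_nth_drop2[computable_intros]:
  "m + m' + i < k \<Longrightarrow> computable k (\<lambda>ys. drop m (drop m' ys) ! i)"
  by (rule computable_cong[OF computable_nth[of "m'+m+i" k]]) (auto simp: add.commute add.left_commute)

declare computable_nth[computable_intros]

primrec prim_rec :: "nat \<Rightarrow> (nat \<Rightarrow> nat \<Rightarrow> nat) \<Rightarrow> nat \<Rightarrow> nat" where
  "prim_rec b h 0 = b"
| "prim_rec b h (Suc n) = h (prim_rec b h n) n"

lemma computable_prim_rec:
  assumes g: "computable k g" and h: "computable (Suc (Suc k)) (\<lambda>ys. h (ys!0) (ys!1) (drop 2 ys))"
    and n: "computable k n"
  shows "computable k (\<lambda>xs. prim_rec (g xs) (\<lambda>a i. h a i xs) (n xs))"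
proof -
  obtain rg where rg: "\<forall>xs. length xs = k \<longrightarrow> eval rg xs (g xs)"
    using g computable_def by auto
  obtain rh where rh: "\<forall>ys. length ys = Suc (Suc k) \<longrightarrow> eval rh ys (h (ys!0) (ys!1) (drop 2 ys))"
    using h computable_def by auto
  have "eval (Pr rg rh) (i # xs) (prim_rec (g xs) (\<lambda>a i. h a i xs) i)" if "length xs = k" for i xs
    using that by (induction i) (auto intro: ev_Pr0 ev_PrS rg[rule_format] rh[rule_format, of "_ # _ # xs", simplified])
  then have "computable (Suc k) (\<lambda>ys. prim_rec (g (tl ys)) (\<lambda>a i. h a i (tl ys)) (hd ys))"
    unfolding computable_def by (intro exI[of _ "Pr rg rh"]) (auto simp: length_Suc_conv)
  from computable_compose[OF this computable_list_Cons[OF n computable_list_drop[of k 0]]]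
  show ?thesis by simp
qed

lemma computable_add[computable_intros]: "computable k a \<Longrightarrow> computable k b \<Longrightarrow> computable k (\<lambda>xs. a xs + b xs)"
proof (rule computable_compose2[where F="(+)"])
  have "prim_rec x (\<lambda>acc i. Suc acc) y = x + y" for x y by (induction y) auto
  moreover have "computable 2 (\<lambda>ys. prim_rec (ys!0) (\<lambda>acc i. Suc acc) (ys!1))"
    by (intro computable_prim_rec computable_intros) auto
  ultimately show "computable 2 (\<lambda>ys. ys!0 + ys!1)" by simp
qed

lemma computable_pred[computable_intros]: "computable k a \<Longrightarrow> computable k (\<lambda>xs. a xs - 1)"
proof (rule computable_compose1[where F="\<lambda>x. x - 1"])
  have "prim_rec 0 (\<lambda>acc i. i) y = y - 1" for y by (induction y) auto
  moreover have "computable 1 (\<lambda>ys. prim_rec 0 (\<lambda>acc i. i) (ys!0))"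
    by (intro computable_prim_rec computable_intros) auto
  ultimately show "computable 1 (\<lambda>ys. ys!0 - 1)" by simp
qed

lemma computable_diff[computable_intros]: "computable k a \<Longrightarrow> computable k b \<Longrightarrow> computable k (\<lambda>xs. a xs - b xs)"
proof (rule computable_compose2[where F="(-)"])
  have "prim_rec x (\<lambda>acc i. acc - 1) y = x - y" for x y by (induction y) auto
  moreover have "computable 2 (\<lambda>ys. prim_rec (ys!0) (\<lambda>acc i. acc - 1) (ys!1))"
    by (intro computable_prim_rec computable_intros) auto
  ultimately show "computable 2 (\<lambda>ys. ys!0 - ys!1)" by simp
qed

lemma computable_mult[computable_intros]: "computable k a \<Longrightarrow> computable k b \<Longrightarrow> computable k (\<lambda>xs. a xs * b xs)"
proof (rule computable_compose2[where F="(*)"])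
  have "prim_rec 0 (\<lambda>acc i. acc + x) y = x * y" for x y by (induction y) auto
  moreover have "computable 2 (\<lambda>ys. prim_rec 0 (\<lambda>acc i. acc + ys!0) (ys!1))"
    by (intro computable_prim_rec computable_intros) auto
  ultimately show "computable 2 (\<lambda>ys. ys!0 * ys!1)" by simp
qed

lemma computable_power[computable_intros]: "computable k a \<Longrightarrow> computable k b \<Longrightarrow> computable k (\<lambda>xs. a xs ^ b xs)"
proof (rule computable_compose2[where F="(^)"])
  have "prim_rec 1 (\<lambda>acc i. acc * x) y = x ^ y" for x y by (induction y) auto
  moreover have "computable 2 (\<lambda>ys. prim_rec 1 (\<lambda>acc i. acc * ys!0) (ys!1))"
    by (intro computable_prim_rec computable_intros) auto
  ultimately show "computable 2 (\<lambda>ys. ys!0 ^ ys!1)" by simp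
qed

lemma computable_mod2[computable_intros]: "computable k a \<Longrightarrow> computable k (\<lambda>xs. a xs mod 2)"
proof (rule computable_compose1[where F="\<lambda>x. x mod 2"])
  have "prim_rec 0 (\<lambda>acc i. 1 - acc) y = y mod 2" for y by (induction y) (auto, presburger)
  moreover have "computable 1 (\<lambda>ys. prim_rec 0 (\<lambda>acc i. 1 - acc) (ys!0))"
    by (intro computable_prim_rec computable_intros) auto
  ultimately show "computable 1 (\<lambda>ys. ys!0 mod 2)" by simp
qed

lemma computable_div2[computable_intros]: "computable k a \<Longrightarrow> computable k (\<lambda>xs. a xs div 2)"
proof (rule computable_compose1[where F="\<lambda>x. x div 2"])
  have "prim_rec 0 (\<lambda>acc i. acc + i mod 2) y = y div 2" for y by (induction y) (auto, presburger)
  moreover have "computable 1 (\<lambda>ys. prim_rec 0 (\<lambda>acc i. acc + i mod 2) (ys!0))"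
    by (intro computable_prim_rec computable_intros) auto
  ultimately show "computable 1 (\<lambda>ys. ys!0 div 2)" by simp
qed

lemma computable_If[computable_intros]:
  assumes "decidable k P" "computable k a" "computable k b"
  shows "computable k (\<lambda>xs. if P xs then a xs else b xs)"
proof -
  have "computable k (\<lambda>xs. prim_rec (b xs) (\<lambda>acc i. a xs) (if P xs then 1 else 0))"
    using assms unfolding decidable_def by (intro computable_prim_rec computable_drop) auto
  thus ?thesis by (rule computable_cong) auto
qed

lemma decidable_eq[computable_intros]:
  assumes "computable k a" "computable k b" shows "decidable k (\<lambda>xs. a xs = b xs)"
  unfolding decidable_def
  by (rule computable_cong[where f="\<lambda>xs. 1 - ((a xs - b xs) + (b xs - a xs))"]) (intro computable_intros assms, auto)

lemma decidable_less[computable_intros]: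
  assumes "computable k a" "computable k b" shows "decidable k (\<lambda>xs. a xs < b xs)"
  unfolding decidable_def
  by (rule computable_cong[where f="\<lambda>xs. 1 - (1 - (b xs - a xs))"]) (intro computable_intros assms, auto)

lemma decidable_le[computable_intros]:
  assumes "computable k a" "computable k b" shows "decidable k (\<lambda>xs. a xs \<le> b xs)"
  unfolding decidable_def
  by (rule computable_cong[where f="\<lambda>xs. 1 - (1 - (Suc (b xs) - a xs))"]) (intro computable_intros assms, auto)

lemma decidable_not[computable_intros]:
  assumes "decidable k P" shows "decidable k (\<lambda>xs. \<not> P xs)"
  unfolding decidable_def
  by (rule computable_cong[where f="\<lambda>xs. 1 - (if P xs then 1 else 0)"])
    (intro computable_intros assms, auto)

lemma decidable_conj[computable_intros]:
  assumes "decidable k P" "decidable k Q" shows "decidable k (\<lambda>xs. P xs \<and> Q xs)"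
  unfolding decidable_def
  by (rule computable_cong[where f="\<lambda>xs. (if P xs then 1 else 0) * (if Q xs then 1 else 0)"])
    (intro computable_intros assms, auto)

lemma decidable_disj[computable_intros]:
  assumes "decidable k P" "decidable k Q" shows "decidable k (\<lambda>xs. P xs \<or> Q xs)"
  unfolding decidable_def
  by (rule computable_cong[where f="\<lambda>xs. 1 - (1 - ((if P xs then 1 else 0) + (if Q xs then 1 else 0)))"])
    (intro computable_intros assms, auto)

lemma computable_sum[computable_intros]:
  assumes "computable (Suc k) (\<lambda>ys. f (ys!0) (drop 1 ys))" "computable k N"
  shows "computable k (\<lambda>xs. \<Sum>i<N xs. f i xs)"
proof -
  have "prim_rec 0 (\<lambda>a i. a + f i xs) n = (\<Sum>i<n. f i xs)" for n xs by (induction n) auto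
  moreover have "computable k (\<lambda>xs. prim_rec 0 (\<lambda>a i. a + f i xs) (N xs))"
    by (intro computable_prim_rec computable_intros assms computable_bind1[OF assms(1)] computable_list_drop | simp)+
  ultimately show ?thesis by simp
qed

definition least_below :: "(nat \<Rightarrow> bool) \<Rightarrow> nat \<Rightarrow> nat" where
  "least_below P B = (if \<exists>i<B. P i then LEAST i. P i else B)"

lemma least_below_prim_rec: "least_below P B = prim_rec B (\<lambda>a i. if a = B \<and> P i then i else a) B"
proof -
  have "m \<le> B \<Longrightarrow> prim_rec B (\<lambda>a i. if a = B \<and> P i then i else a) m = (if \<exists>i<m. P i then LEAST i. P i else B)" for m
  proof (induction m)
    case (Suc m)
    show ?case
    proof (cases "\<exists>i<m. P i")
      case True
      then have "(LEAST i. P i) < m" by (meson Least_le le_less_trans)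
      then show ?thesis using True Suc by (auto intro: less_SucI)
    next
      case False
      then show ?thesis using Suc by (auto simp: less_Suc_eq intro!: Least_equality[symmetric] leI)
    qed
  qed simp
  thus ?thesis by (simp add: least_below_def)
qed

lemma computable_least_below[computable_intros]:
  assumes "decidable (Suc k) (\<lambda>ys. P (ys!0) (drop 1 ys))" "computable k B"
  shows "computable k (\<lambda>xs. least_below (\<lambda>i. P i xs) (B xs))"
  unfolding least_below_prim_rec
  by (intro computable_prim_rec computable_intros assms decidable_bind1[OF assms(1)]
      computable_list_drop computable_drop[OF assms(2)] | simp)+

lemma decidable_bounded_ex[computable_intros]:
  assumes "decidable (Suc k) (\<lambda>ys. P (ys!0) (drop 1 ys))" "computable k B"
  shows "decidable k (\<lambda>xs. \<exists>i<B xs. P i xs)"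
proof -
  have "(least_below (\<lambda>i. P i xs) (B xs) < B xs) = (\<exists>i<B xs. P i xs)" for xs
    by (auto simp: least_below_def intro: le_less_trans[OF Least_le])
  moreover have "decidable k (\<lambda>xs. least_below (\<lambda>i. P i xs) (B xs) < B xs)"
    by (intro computable_intros assms)
  ultimately show ?thesis by simp
qed

section \<open>Computing with codes of binary strings\<close>

lemma bcode_Nil[simp]: "bcode [] = 0"
  by (simp add: bcode_def)

lemma bcode_Cons[simp]: "bcode (b # xs) = 2 * bcode xs + 1 + (if b then 1 else 0)"
  by (simp add: bcode_def)

lemma bcode_eq_0_iff[simp]: "bcode xs = 0 \<longleftrightarrow> xs = []"
  by (cases xs) auto

lemma bcode_append: "bcode (xs @ ys) = bcode xs + 2 ^ length xs * bcode ys"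
  by (induction xs) auto

lemma length_le_bcode: "length xs \<le> bcode xs"
  by (induction xs) auto

lemma bcode_less: "bcode xs < 2 ^ Suc (length xs)"
proof -
  have "bcode xs + 2 \<le> 2 ^ Suc (length xs)" by (induction xs) auto
  thus ?thesis by simp
qed

fun bdec :: "nat \<Rightarrow> bool list" where
  "bdec x = (if x = 0 then [] else ((x - 1) mod 2 = 1) # bdec ((x - 1) div 2))"

declare bdec.simps[simp del]

lemma bcode_bdec[simp]: "bcode (bdec x) = x"
proof (induction x rule: bdec.induct)
  case (1 x)
  show ?case
  proof (cases "x = 0")
    case False
    have "bcode (bdec x) = 2 * ((x - 1) div 2) + 1 + (if (x - 1) mod 2 = 1 then 1 else 0)"
      using 1 False by (subst bdec.simps) simp
    also have "\<dots> = x" using False by presburger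
    finally show ?thesis .
  qed (subst bdec.simps, simp)
qed

lemma bdec_bcode[simp]: "bdec (bcode xs) = xs"
  by (induction xs) (subst bdec.simps, auto)+

lemma inj_bcode: "inj bcode"
  by (metis bdec_bcode injI)

definition tl_code :: "nat \<Rightarrow> nat" where
  "tl_code x = (x - 1) div 2"

definition hd_code :: "nat \<Rightarrow> nat" where
  "hd_code x = (x - 1) mod 2"

definition drop_code :: "nat \<Rightarrow> nat \<Rightarrow> nat" where
  "drop_code k x = prim_rec x (\<lambda>a i. tl_code a) k"

definition nth_code :: "nat \<Rightarrow> nat \<Rightarrow> nat" where
  "nth_code x k = hd_code (drop_code k x)"

definition length_code :: "nat \<Rightarrow> nat" where
  "length_code x = prim_rec 0 (\<lambda>a i. if drop_code i x = 0 then a else Suc a) x"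

definition append_code :: "nat \<Rightarrow> nat \<Rightarrow> nat" where
  "append_code a b = a + 2 ^ length_code a * b"

text \<open>For \<open>f\<close> with values in \<open>{0, 1}\<close>, the code of the string whose \<open>i\<close>-th bit is \<open>f i = 1\<close>.\<close>
definition build_code :: "(nat \<Rightarrow> nat) \<Rightarrow> nat \<Rightarrow> nat" where
  "build_code f N = (\<Sum>i<N. 2 ^ i * Suc (f i))"

definition take_code :: "nat \<Rightarrow> nat \<Rightarrow> nat" where
  "take_code k x = build_code (nth_code x) k"

definition count_code :: "nat \<Rightarrow> nat" where
  "count_code x = (\<Sum>i<length_code x. nth_code x i)"

definition read_code :: "nat \<Rightarrow> nat \<Rightarrow> nat \<Rightarrow> nat" where
  "read_code x off w = (\<Sum>k<w. 2 ^ k * nth_code x (off + k))"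

definition escape_code :: "nat \<Rightarrow> nat" where
  "escape_code x = build_code (\<lambda>i. if even i then 1 else nth_code x (i div 2)) (2 * length_code x)"

definition unary_code :: "nat \<Rightarrow> nat" where
  "unary_code n = build_code (\<lambda>i. 1) n"

definition triple_code :: "nat \<Rightarrow> nat \<Rightarrow> nat \<Rightarrow> nat" where
  "triple_code a b c = append_code (append_code (escape_code a) (bcode [False, False]))
     (append_code (append_code (escape_code b) (bcode [False, False]))
       (append_code (escape_code c) (bcode [False, False])))"

text \<open>Interleave \<open>s\<close> and \<open>r\<close>, taking the next bit of \<open>s\<close> where the mask \<open>m\<close> has a 1 and the
  next bit of \<open>r\<close> where it has a 0.\<close>
definition merge_code :: "nat \<Rightarrow> nat \<Rightarrow> nat \<Rightarrow> nat" where
  "merge_code m s r = build_code (\<lambda>k. let j = (\<Sum>i<k. nth_code m i) in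
      if nth_code m k = 1 then nth_code s j else nth_code r (k - j)) (length_code m)"

lemma computable_tl_code[computable_intros]: "computable k a \<Longrightarrow> computable k (\<lambda>xs. tl_code (a xs))"
  unfolding tl_code_def by (intro computable_intros)

lemma computable_hd_code[computable_intros]: "computable k a \<Longrightarrow> computable k (\<lambda>xs. hd_code (a xs))"
  unfolding hd_code_def by (intro computable_intros)

lemma computable_drop_code[computable_intros]:
  "computable k a \<Longrightarrow> computable k b \<Longrightarrow> computable k (\<lambda>xs. drop_code (a xs) (b xs))"
  unfolding drop_code_def by (intro computable_prim_rec computable_intros | simp)+

lemma computable_nth_code[computable_intros]:
  "computable k a \<Longrightarrow> computable k b \<Longrightarrow> computable k (\<lambda>xs. nth_code (a xs) (b xs))"
  unfolding nth_code_def by (intro computable_intros)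

lemma computable_length_code[computable_intros]:
  assumes "computable k a" shows "computable k (\<lambda>xs. length_code (a xs))"
  unfolding length_code_def
  by (intro computable_prim_rec computable_intros assms computable_drop[OF assms] | simp)+

lemma computable_append_code[computable_intros]:
  "computable k a \<Longrightarrow> computable k b \<Longrightarrow> computable k (\<lambda>xs. append_code (a xs) (b xs))"
  unfolding append_code_def by (intro computable_intros)

lemma computable_build_code[computable_intros]:
  assumes "computable (Suc k) (\<lambda>ys. f (ys!0) (drop 1 ys))" "computable k N"
  shows "computable k (\<lambda>xs. build_code (\<lambda>i. f i xs) (N xs))"
  unfolding build_code_def
  by (intro computable_intros assms computable_bind1[OF assms(1)] computable_list_drop | simp)+

lemma computable_take_code[computable_intros]:
  assumes "computable k a" "computable k b" shows "computable k (\<lambda>xs. take_code (a xs) (b xs))"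
proof (rule computable_compose2[where F=take_code, OF _ assms])
  show "computable 2 (\<lambda>ys. take_code (ys!0) (ys!1))"
    unfolding take_code_def by (intro computable_intros | simp)+
qed

lemma computable_count_code[computable_intros]:
  assumes "computable k a" shows "computable k (\<lambda>xs. count_code (a xs))"
proof (rule computable_compose1[where F=count_code, OF _ assms])
  show "computable 1 (\<lambda>ys. count_code (ys!0))"
    unfolding count_code_def by (intro computable_intros | simp)+
qed

lemma computable_read_code[computable_intros]:
  assumes "computable k a" "computable k b" "computable k c"
  shows "computable k (\<lambda>xs. read_code (a xs) (b xs) (c xs))"
proof (rule computable_compose3[where F=read_code, OF _ assms])
  show "computable 3 (\<lambda>ys. read_code (ys!0) (ys!1) (ys!2))"
    unfolding read_code_def by (intro computable_intros | simp)+
qed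

lemma computable_escape_code[computable_intros]:
  assumes "computable k a" shows "computable k (\<lambda>xs. escape_code (a xs))"
proof (rule computable_compose1[where F=escape_code, OF _ assms])
  show "computable 1 (\<lambda>ys. escape_code (ys!0))"
    unfolding escape_code_def even_iff_mod_2_eq_zero by (intro computable_intros | simp)+
qed

lemma computable_unary_code[computable_intros]:
  assumes "computable k a" shows "computable k (\<lambda>xs. unary_code (a xs))"
proof (rule computable_compose1[where F=unary_code, OF _ assms])
  show "computable 1 (\<lambda>ys. unary_code (ys!0))"
    unfolding unary_code_def by (intro computable_intros | simp)+
qed

lemma computable_triple_code[computable_intros]:
  "computable k a \<Longrightarrow> computable k b \<Longrightarrow> computable k c \<Longrightarrow> computable k (\<lambda>xs. triple_code (a xs) (b xs) (c xs))"
  unfolding triple_code_def by (intro computable_intros)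

lemma computable_merge_code[computable_intros]:
  assumes "computable k a" "computable k b" "computable k c"
  shows "computable k (\<lambda>xs. merge_code (a xs) (b xs) (c xs))"
proof (rule computable_compose3[where F=merge_code, OF _ assms])
  show "computable 3 (\<lambda>ys. merge_code (ys!0) (ys!1) (ys!2))"
    unfolding merge_code_def Let_def by (intro computable_intros | simp)+
qed

lemma tl_code_bcode[simp]: "tl_code (bcode xs) = bcode (tl xs)"
  by (cases xs) (auto simp: tl_code_def)

lemma hd_code_bcode[simp]: "hd_code (bcode (b # xs)) = (if b then 1 else 0)"
  by (auto simp: hd_code_def)

lemma drop_code_bcode[simp]: "drop_code k (bcode xs) = bcode (drop k xs)"
  by (induction k) (auto simp: drop_code_def drop_Suc tl_drop)

lemma nth_code_bcode[simp]: "k < length xs \<Longrightarrow> nth_code (bcode xs) k = (if xs ! k then 1 else 0)"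
  by (simp add: nth_code_def hd_code_def Cons_nth_drop_Suc[symmetric])

lemma length_code_bcode[simp]: "length_code (bcode xs) = length xs"
proof -
  have "prim_rec 0 (\<lambda>a i. if drop_code i (bcode xs) = 0 then a else Suc a) m = min m (length xs)" for m
    by (induction m) auto
  thus ?thesis using length_le_bcode[of xs] by (simp add: length_code_def min_absorb2)
qed

lemma append_code_bcode[simp]: "append_code (bcode xs) (bcode ys) = bcode (xs @ ys)"
  by (simp add: append_code_def bcode_append)

lemma build_code_cong: "(\<And>i. i < N \<Longrightarrow> f i = g i) \<Longrightarrow> build_code f N = build_code g N"
  by (simp add: build_code_def)

lemma bcode_eq_build_code: "bcode xs = build_code (\<lambda>i. if xs ! i then 1 else 0) (length xs)"
proof (induction xs rule: rev_induct)
  case (snoc x xs)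
  have "build_code (\<lambda>i. if (xs @ [x]) ! i then 1 else 0) (length xs) = bcode xs"
    unfolding snoc by (rule build_code_cong) (simp add: nth_append)
  then show ?case by (simp add: build_code_def bcode_append)
qed (simp add: build_code_def)

lemma build_code_map: "build_code (\<lambda>i. if P i then 1 else 0) N = bcode (map P [0..<N])"
  by (subst bcode_eq_build_code) (auto intro!: build_code_cong)

lemma take_code_bcode[simp]: "take_code (length xs) (bcode (xs @ ys)) = bcode xs"
  by (subst (2) bcode_eq_build_code) (auto simp: take_code_def nth_append intro!: build_code_cong)

lemma sum_nth_code_bcode:
  "k \<le> length xs \<Longrightarrow> (\<Sum>i<k. nth_code (bcode xs) i) = length (filter id (take k xs))"
  by (induction k) (auto simp: take_Suc_conv_app_nth)

lemma count_code_bcode[simp]: "count_code (bcode xs) = length (filter id xs)"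
  by (simp add: count_code_def sum_nth_code_bcode del: nth_code_bcode)

lemma unary_code_eq[simp]: "unary_code n = bcode (unary n)"
  using build_code_map[of "\<lambda>_. True" n]
  by (simp add: unary_code_def unary_def map_replicate_const)

definition nat_bits :: "nat \<Rightarrow> nat \<Rightarrow> bool list" where
  "nat_bits w v = map (\<lambda>k. odd (v div 2 ^ k)) [0..<w]"

lemma length_nat_bits[simp]: "length (nat_bits w v) = w"
  by (simp add: nat_bits_def)

lemma read_code_nat_bits:
  assumes "v < 2 ^ w"
  shows "read_code (bcode (pre @ nat_bits w v @ post)) (length pre) w = v"
proof -
  have "read_code (bcode (pre @ nat_bits w v @ post)) (length pre) w = (\<Sum>k<w. 2 ^ k * (v div 2 ^ k mod 2))"
    unfolding read_code_def
    by (rule sum.cong) (auto simp: nth_append nat_bits_def odd_iff_mod_2_eq_one)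
  also have "\<dots> = v mod 2 ^ w"
  proof (induction w)
    case (Suc w)
    have "v mod 2 ^ Suc w = 2 ^ w * (v div 2 ^ w mod 2) + v mod 2 ^ w"
      by (metis mod_mult2_eq power_Suc2)
    thus ?case using Suc by simp
  qed simp
  finally show ?thesis using assms by simp
qed

lemma escape_code_bcode[simp]: "escape_code (bcode xs) = bcode (concat (map (\<lambda>b. [True, b]) xs))"
proof -
  have len: "length (concat (map (\<lambda>b. [True, b]) xs)) = 2 * length xs"
    by (induction xs) auto
  have "concat (map (\<lambda>b. [True, b]) xs) ! i = (if even i then True else xs ! (i div 2))"
    if "i < 2 * length xs" for i
    using that
  proof (induction xs arbitrary: i)
    case (Cons a xs)
    then show ?case by (cases i; cases "i - 1") auto
  qed simp
  then show ?thesis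
    by (subst (2) bcode_eq_build_code) (auto simp: escape_code_def len intro!: build_code_cong)
qed

lemma triple_code_bcode: "triple_code (bcode a) (bcode b) (bcode c) = bcode (tuple_enc [a, b, c])"
  unfolding triple_code_def tuple_enc_def by (simp del: bcode_Cons)

lemma filter_nth_length_filter_take:
  assumes "k < length xs" "P (xs ! k)"
  shows "length (filter P (take k xs)) < length (filter P xs)"
    and "filter P xs ! length (filter P (take k xs)) = xs ! k"
proof -
  have "xs = take k xs @ xs ! k # drop (Suc k) xs" using assms(1) by (simp add: id_take_nth_drop)
  then have "filter P xs = filter P (take k xs) @ xs ! k # filter P (drop (Suc k) xs)"
    using assms(2) by (metis filter.simps(2) filter_append)
  thus "length (filter P (take k xs)) < length (filter P xs)"
    and "filter P xs ! length (filter P (take k xs)) = xs ! k" by simp_all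
qed

lemma merge_code_bcode:
  "merge_code (bcode (map P xs)) (bcode (map f (filter P xs)))
     (bcode (map g (filter (\<lambda>x. \<not> P x) xs) @ rest))
   = bcode (map (\<lambda>x. if P x then f x else g x) xs)"
proof -
  have "(let j = \<Sum>i<k. nth_code (bcode (map P xs)) i in
         if nth_code (bcode (map P xs)) k = 1 then nth_code (bcode (map f (filter P xs))) j
         else nth_code (bcode (map g (filter (\<lambda>x. \<not> P x) xs) @ rest)) (k - j))
      = (if map (\<lambda>x. if P x then f x else g x) xs ! k then 1 else 0)" if k: "k < length xs" for k
  proof -
    have j: "(\<Sum>i<k. nth_code (bcode (map P xs)) i) = length (filter P (take k xs))"
      using k by (simp add: sum_nth_code_bcode take_map filter_map o_def del: nth_code_bcode)
    have "length (filter P (take k xs)) + length (filter (\<lambda>x. \<not> P x) (take k xs)) = k"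
      using k sum_length_filter_compl[of P "take k xs"] by simp
    then have "k - length (filter P (take k xs)) = length (filter (\<lambda>x. \<not> P x) (take k xs))"
      by arith
    with filter_nth_length_filter_take[OF k, of P] filter_nth_length_filter_take[OF k, of "\<lambda>x. \<not> P x"]
    show ?thesis using k unfolding Let_def j by (cases "P (xs ! k)") (simp_all add: nth_append)
  qed
  then show ?thesis
    by (subst (2) bcode_eq_build_code) (auto simp: merge_code_def intro!: build_code_cong)
qed

definition pairs_row_code :: "(nat \<Rightarrow> nat \<Rightarrow> nat) \<Rightarrow> nat \<Rightarrow> nat \<Rightarrow> nat" where
  "pairs_row_code g i n = prim_rec 0 (\<lambda>b j. append_code b (g i (Suc (i + j)))) (n - i)"

definition pairs_code :: "(nat \<Rightarrow> nat \<Rightarrow> nat) \<Rightarrow> nat \<Rightarrow> nat" where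
  "pairs_code g n = prim_rec 0 (\<lambda>a i. append_code a (pairs_row_code g (Suc i) n)) n"

lemma computable_pairs_row_code:
  assumes "computable (Suc (Suc k)) (\<lambda>ys. g (ys!0) (ys!1) (drop 2 ys))" "computable k I" "computable k N"
  shows "computable k (\<lambda>xs. pairs_row_code (\<lambda>i j. g i j xs) (I xs) (N xs))"
  unfolding pairs_row_code_def
  by (intro computable_prim_rec computable_intros assms computable_drop[OF assms(2)] computable_drop[OF assms(3)]
      computable_bind2[OF assms(1)] computable_list_drop | simp)+

lemma computable_pairs_code[computable_intros]:
  assumes "computable (Suc (Suc k)) (\<lambda>ys. g (ys!0) (ys!1) (drop 2 ys))" "computable k N"
  shows "computable k (\<lambda>xs. pairs_code (\<lambda>i j. g i j xs) (N xs))"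
proof -
  have "computable (Suc (Suc (Suc (Suc k)))) (\<lambda>zs. g (zs!0) (zs!1) (drop 2 (drop 2 zs)))"
    by (rule computable_bind2[OF assms(1)]) (auto intro: computable_nth computable_list_drop)
  then show ?thesis unfolding pairs_code_def
    by (intro computable_prim_rec computable_intros assms computable_drop[OF assms(2)]
        computable_pairs_row_code[where g="\<lambda>i j ys. g i j (drop 2 ys)"] | simp)+
qed

lemma pairs_lex_concat:
  "concat (map G (pairs_lex n)) = concat (map (\<lambda>i. concat (map (\<lambda>j. G (i, j)) [Suc i..<Suc n])) [1..<Suc n])"
proof -
  have "concat (concat xss) = concat (map concat xss)" for xss :: "'a list list list"
    by (induction xss) auto
  then show ?thesis by (simp add: pairs_lex_def map_concat o_def del: upt_Suc)
qed

lemma pairs_code_bcode: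
  assumes "\<And>i j. g i j = bcode (G (i, j))"
  shows "pairs_code g n = bcode (concat (map G (pairs_lex n)))"
proof -
  have row: "pairs_row_code g i n = bcode (concat (map (\<lambda>j. G (i, j)) [Suc i..<Suc n]))" for i
  proof -
    have "prim_rec 0 (\<lambda>b j. append_code b (g i (Suc (i + j)))) t
        = bcode (concat (map (\<lambda>j. G (i, j)) [Suc i..<Suc i + t]))" for t
      by (induction t) (auto simp: assms)
    from this[of "n - i"] show ?thesis by (cases "i \<le> n") (auto simp: pairs_row_code_def)
  qed
  have "prim_rec 0 (\<lambda>a i. append_code a (pairs_row_code g (Suc i) n)) t
      = bcode (concat (map (\<lambda>i. concat (map (\<lambda>j. G (i, j)) [Suc i..<Suc n])) [1..<Suc t]))" for t
    by (induction t) (auto simp: row)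
  thus ?thesis by (simp add: pairs_code_def pairs_lex_concat)
qed

text \<open>\<open>Suc (if b then 1 else 0)\<close> and \<open>0\<close> are the codes of \<open>[b]\<close> and \<open>[]\<close>.\<close>

lemma pairs_code_map:
  "pairs_code (\<lambda>i j. Suc (if P i j then 1 else 0)) n = bcode (map (\<lambda>(i, j). P i j) (pairs_lex n))"
proof -
  have "concat (map (\<lambda>x. [P (fst x) (snd x)]) xs) = map (\<lambda>x. P (fst x) (snd x)) xs"
    for xs :: "(nat \<times> nat) list"
    by (induction xs) auto
  then show ?thesis by (subst pairs_code_bcode[where G="\<lambda>(i, j). [P i j]"]) (simp_all add: split_def)
qed

lemma pairs_code_filter:
  "pairs_code (\<lambda>i j. if P i j then Suc (if f i j then 1 else 0) else 0) n
   = bcode (map (\<lambda>(i, j). f i j) (filter (\<lambda>(i, j). P i j) (pairs_lex n)))"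
proof -
  have "concat (map (\<lambda>x. if P (fst x) (snd x) then [f (fst x) (snd x)] else []) xs)
      = map (\<lambda>x. f (fst x) (snd x)) (filter (\<lambda>x. P (fst x) (snd x)) xs)" for xs :: "(nat \<times> nat) list"
    by (induction xs) auto
  then show ?thesis
    by (subst pairs_code_bcode[where G="\<lambda>(i, j). if P i j then [f i j] else []"]) (simp_all add: split_def)
qed

section \<open>Counting strings of a given weight\<close>

definition weight_code :: "nat \<Rightarrow> nat \<Rightarrow> nat \<Rightarrow> bool" where
  "weight_code D d x \<longleftrightarrow> length_code x = D \<and> count_code x = d"

definition rank_code :: "nat \<Rightarrow> nat \<Rightarrow> nat \<Rightarrow> nat" where
  "rank_code D d x = (\<Sum>y<x. if weight_code D d y then 1 else 0)"

definition num_weight_codes :: "nat \<Rightarrow> nat \<Rightarrow> nat" where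
  "num_weight_codes D d = rank_code D d (2 ^ Suc D)"

definition unrank_code :: "nat \<Rightarrow> nat \<Rightarrow> nat \<Rightarrow> nat" where
  "unrank_code D d r = least_below (\<lambda>x. weight_code D d x \<and> rank_code D d x = r) (2 ^ Suc D)"

definition ceil_log2 :: "nat \<Rightarrow> nat" where
  "ceil_log2 c = least_below (\<lambda>l. c \<le> 2 ^ l) (Suc c)"

definition bit_width :: "nat \<Rightarrow> nat" where
  "bit_width n = least_below (\<lambda>w. n < 2 ^ w) (Suc n)"

lemma decidable_weight_code[computable_intros]:
  "computable k a \<Longrightarrow> computable k b \<Longrightarrow> computable k c \<Longrightarrow> decidable k (\<lambda>xs. weight_code (a xs) (b xs) (c xs))"
  unfolding weight_code_def by (intro computable_intros)

lemma computable_rank_code[computable_intros]: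
  assumes "computable k a" "computable k b" "computable k c"
  shows "computable k (\<lambda>xs. rank_code (a xs) (b xs) (c xs))"
proof (rule computable_compose3[where F=rank_code, OF _ assms])
  show "computable 3 (\<lambda>ys. rank_code (ys!0) (ys!1) (ys!2))"
    unfolding rank_code_def by (intro computable_intros | simp)+
qed

lemma computable_num_weight_codes[computable_intros]:
  "computable k a \<Longrightarrow> computable k b \<Longrightarrow> computable k (\<lambda>xs. num_weight_codes (a xs) (b xs))"
  unfolding num_weight_codes_def by (intro computable_intros)

lemma computable_unrank_code[computable_intros]:
  assumes "computable k a" "computable k b" "computable k c"
  shows "computable k (\<lambda>xs. unrank_code (a xs) (b xs) (c xs))"
proof (rule computable_compose3[where F=unrank_code, OF _ assms])
  show "computable 3 (\<lambda>ys. unrank_code (ys!0) (ys!1) (ys!2))"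
    unfolding unrank_code_def by (intro computable_intros | simp)+
qed

lemma computable_ceil_log2[computable_intros]:
  assumes "computable k a" shows "computable k (\<lambda>xs. ceil_log2 (a xs))"
proof (rule computable_compose1[where F=ceil_log2, OF _ assms])
  show "computable 1 (\<lambda>ys. ceil_log2 (ys!0))"
    unfolding ceil_log2_def by (intro computable_intros | simp)+
qed

lemma computable_bit_width[computable_intros]:
  assumes "computable k a" shows "computable k (\<lambda>xs. bit_width (a xs))"
proof (rule computable_compose1[where F=bit_width, OF _ assms])
  show "computable 1 (\<lambda>ys. bit_width (ys!0))"
    unfolding bit_width_def by (intro computable_intros | simp)+
qed

lemma weight_code_bcode: "weight_code D d (bcode xs) \<longleftrightarrow> length xs = D \<and> length (filter id xs) = d"
  by (simp add: weight_code_def)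

lemma weight_code_less: "weight_code D d x \<Longrightarrow> x < 2 ^ Suc D"
  using bcode_less[of "bdec x"] weight_code_bcode[of D d "bdec x"] by simp

lemma rank_code_strict_mono: "y < x \<Longrightarrow> weight_code D d y \<Longrightarrow> rank_code D d y < rank_code D d x"
proof -
  assume "y < x" "weight_code D d y"
  then have "rank_code D d (Suc y) \<le> rank_code D d x"
    unfolding rank_code_def by (intro sum_mono2) auto
  with \<open>weight_code D d y\<close> show ?thesis by (simp add: rank_code_def)
qed

lemma unrank_rank_code:
  assumes "weight_code D d x"
  shows "unrank_code D d (rank_code D d x) = x"
proof -
  have "(LEAST y. weight_code D d y \<and> rank_code D d y = rank_code D d x) = x"
    by (rule Least_equality) (use assms in \<open>auto, metis leI less_irrefl rank_code_strict_mono\<close>)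
  thus ?thesis unfolding unrank_code_def least_below_def using weight_code_less[OF assms] assms by auto
qed

lemma rank_code_less: "weight_code D d x \<Longrightarrow> rank_code D d x < num_weight_codes D d"
  unfolding num_weight_codes_def using rank_code_strict_mono weight_code_less by blast

lemma num_weight_codes_eq_card:
  "num_weight_codes D d = card {xs. length xs = D \<and> length (filter id xs) = d}"
proof -
  let ?S = "{xs. length xs = D \<and> length (filter id xs) = d}"
  have "num_weight_codes D d = card {x. x < 2 ^ Suc D \<and> weight_code D d x}"
    by (simp add: num_weight_codes_def rank_code_def sum.If_cases lessThan_def Collect_conj_eq Int_commute)
  also have "{x. x < 2 ^ Suc D \<and> weight_code D d x} = bcode ` ?S"
  proof (intro set_eqI iffI)
    fix x assume "x \<in> {x. x < 2 ^ Suc D \<and> weight_code D d x}"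
    then have "bdec x \<in> ?S" using weight_code_bcode[of D d "bdec x"] by simp
    then show "x \<in> bcode ` ?S" by (metis bcode_bdec image_eqI)
  qed (use bcode_less weight_code_bcode in auto)
  also have "card (bcode ` ?S) = card ?S"
    by (rule card_image) (meson inj_bcode inj_on_subset subset_UNIV)
  finally show ?thesis .
qed

lemma least_below_LEAST: "\<exists>i<B. P i \<Longrightarrow> least_below P B = (LEAST i. P i)"
  by (simp add: least_below_def)

lemma ceil_log2: "c \<le> 2 ^ ceil_log2 c" and ceil_log2_minimal: "ceil_log2 c > 0 \<Longrightarrow> 2 ^ (ceil_log2 c - 1) < c"
proof -
  have ex: "\<exists>l<Suc c. c \<le> 2 ^ l" by (rule exI[of _ c]) (simp add: less_imp_le)
  then have L: "ceil_log2 c = (LEAST l. c \<le> 2 ^ l)" by (simp add: ceil_log2_def least_below_LEAST)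
  show "c \<le> 2 ^ ceil_log2 c" unfolding L using ex by (meson LeastI)
  show "2 ^ (ceil_log2 c - 1) < c" if "ceil_log2 c > 0"
    using not_less_Least[of "ceil_log2 c - 1" "\<lambda>l. c \<le> 2 ^ l"] that unfolding L by simp
qed

lemma bit_width: "n < 2 ^ bit_width n" and bit_width_minimal: "bit_width n > 0 \<Longrightarrow> 2 ^ (bit_width n - 1) \<le> n"
proof -
  have ex: "\<exists>w<Suc n. n < 2 ^ w" by (rule exI[of _ n]) simp
  then have L: "bit_width n = (LEAST w. n < 2 ^ w)" by (simp add: bit_width_def least_below_LEAST)
  show "n < 2 ^ bit_width n" unfolding L using ex by (meson LeastI)
  show "2 ^ (bit_width n - 1) \<le> n" if "bit_width n > 0"
    using not_less_Least[of "bit_width n - 1" "\<lambda>w. n < 2 ^ w"] that unfolding L by simp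
qed

lemma sum_power_count:
  fixes x :: real
  shows "(\<Sum>xs\<in>{xs::bool list. length xs = D}. x ^ length (filter id xs)) = (1 + x) ^ D"
proof (induction D)
  case 0
  have "{xs::bool list. length xs = 0} = {[]}" by auto
  then show ?case by simp
next
  case (Suc D)
  define A where "A = {xs::bool list. length xs = D}"
  have fin: "finite A" unfolding A_def using finite_lists_length_eq[of "UNIV::bool set" D] by simp
  have "{xs::bool list. length xs = Suc D} = Cons True ` A \<union> Cons False ` A"
    by (auto simp: A_def length_Suc_conv)
  then have "(\<Sum>xs\<in>{xs::bool list. length xs = Suc D}. x ^ length (filter id xs))
      = (\<Sum>xs\<in>Cons True ` A. x ^ length (filter id xs)) + (\<Sum>xs\<in>Cons False ` A. x ^ length (filter id xs))"
    by (simp only:) (rule sum.union_disjoint, use fin in auto)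
  also have "\<dots> = x * (\<Sum>ys\<in>A. x ^ length (filter id ys)) + (\<Sum>ys\<in>A. x ^ length (filter id ys))"
    by (simp add: sum.reindex sum_distrib_left)
  also have "\<dots> = (1 + x) ^ Suc D"
    by (simp only: A_def Suc.IH) (simp add: algebra_simps)
  finally show ?case .
qed

lemma half_one_plus_exp_le: "(1 + exp h) / 2 \<le> exp (h / 2 + h\<^sup>2 / 8 :: real)"
proof -
  have pos: "(1 + exp t) / 2 \<le> exp (t / 2 + t\<^sup>2 / 8)" if t: "t \<ge> 0" for t :: real
  proof -
    have "- t * (1/2) + ln (1 + (1/2) * (exp t - 1)) \<le> t\<^sup>2 / 8"
      by (rule Hoeffdings_lemma_aux) (use t in auto)
    moreover have "1 + (1/2) * (exp t - 1) = (1 + exp t) / 2" by (simp add: field_simps)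
    ultimately have "ln ((1 + exp t) / 2) \<le> t / 2 + t\<^sup>2 / 8" by (simp only:)
    then have "exp (ln ((1 + exp t) / 2)) \<le> exp (t / 2 + t\<^sup>2 / 8)" by simp
    then show ?thesis by (simp add: add_pos_pos)
  qed
  show ?thesis
  proof (cases "h \<ge> 0")
    case False
    have "(1 + exp h) / 2 = exp h * ((1 + exp (-h)) / 2)"
      by (simp add: field_simps exp_minus)
    also have "\<dots> \<le> exp h * exp (-h / 2 + h\<^sup>2 / 8)"
      using pos[of "-h"] False by (intro mult_left_mono) auto
    also have "\<dots> = exp (h / 2 + h\<^sup>2 / 8)"
      by (simp add: exp_add[symmetric])
    finally show ?thesis .
  qed (rule pos)
qed

text \<open>Chernoff: weighting every string of length \<open>D\<close> by \<open>exp (h k)\<close>, where \<open>k\<close> is its number of ones,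
  gives \<open>C exp (h d) \<le> (1 + exp h) ^ D\<close> for the number \<open>C\<close> of strings of weight \<open>d\<close>; Hoeffding's lemma
  bounds \<open>(1 + exp h) / 2\<close>, and \<open>h = 4 (d - D / 2) / D\<close> is the best choice.\<close>

lemma card_weight_le:
  assumes D: "D > 0"
  shows "real (card {xs::bool list. length xs = D \<and> length (filter id xs) = d})
     \<le> 2 ^ D * exp (- 2 * (real d - real D / 2)\<^sup>2 / real D)"
proof -
  define h where "h = 4 * (real d - real D / 2) / real D"
  define c where "c = real (card {xs::bool list. length xs = D \<and> length (filter id xs) = d})"
  have fin: "finite {xs::bool list. length xs = D}"
    using finite_lists_length_eq[of "UNIV::bool set" D] by simp
  have "c * exp h ^ d = (\<Sum>xs\<in>{xs. length xs = D \<and> length (filter id xs) = d}. exp h ^ length (filter id xs))"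
    by (simp add: c_def)
  also have "\<dots> \<le> (\<Sum>xs\<in>{xs::bool list. length xs = D}. exp h ^ length (filter id xs))"
    by (rule sum_mono2) (use fin in auto)
  also have "\<dots> = 2 ^ D * ((1 + exp h) / 2) ^ D" by (simp add: sum_power_count power_divide)
  also have "\<dots> \<le> 2 ^ D * exp (h / 2 + h\<^sup>2 / 8) ^ D"
    by (intro mult_left_mono power_mono half_one_plus_exp_le) (auto intro: add_nonneg_nonneg)
  finally have "c * exp (h * d) \<le> 2 ^ D * exp (D * (h / 2 + h\<^sup>2 / 8))"
    by (simp add: exp_of_nat_mult[symmetric] mult.commute)
  then have "c \<le> 2 ^ D * (exp (D * (h / 2 + h\<^sup>2 / 8)) / exp (h * d))"
    by (simp add: field_simps)
  also have "exp (D * (h / 2 + h\<^sup>2 / 8)) / exp (h * d) = exp (D * (h / 2 + h\<^sup>2 / 8) - h * d)"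
    by (simp add: exp_diff)
  also have "D * (h / 2 + h\<^sup>2 / 8) - h * d = - 2 * (real d - real D / 2)\<^sup>2 / real D"
    using D unfolding h_def by (simp add: field_simps power2_eq_square)
  finally show ?thesis by (simp add: c_def)
qed

lemma ceil_log2_num_weight_codes_le:
  assumes D: "D > 0" and d: "d \<le> D"
  shows "2 * (real d - real D / 2)\<^sup>2 / real D \<le> real D - real (ceil_log2 (num_weight_codes D d)) + 1"
proof -
  define X where "X = 2 * (real d - real D / 2)\<^sup>2 / real D"
  define L where "L = ceil_log2 (num_weight_codes D d)"
  show ?thesis
  proof (cases "L = 0")
    case True
    have "\<bar>real d - real D / 2\<bar> \<le> real D / 2" using d by (intro abs_leI) auto
    then have "\<bar>real d - real D / 2\<bar>\<^sup>2 \<le> (real D / 2)\<^sup>2" by (intro power_mono) auto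
    then have "(real d - real D / 2)\<^sup>2 \<le> (real D / 2)\<^sup>2" by simp
    then have "X \<le> 2 * (real D / 2)\<^sup>2 / real D"
      unfolding X_def by (intro divide_right_mono) auto
    also have "\<dots> = real D / 2" using D by (simp add: power2_eq_square)
    finally have "X \<le> real D / 2" .
    then show ?thesis using True by (simp add: X_def L_def)
  next
    case False
    then have "2 ^ (L - 1) < num_weight_codes D d"
      using ceil_log2_minimal by (simp add: L_def)
    then have "(2::real) ^ (L - 1) < num_weight_codes D d"
      by (metis of_nat_less_iff of_nat_numeral of_nat_power)
    also have "\<dots> \<le> 2 ^ D * exp (- X)"
      using card_weight_le[OF D, of d] by (simp add: num_weight_codes_eq_card X_def)
    finally have "real (L - 1) * ln 2 < real D * ln 2 - X"
      using ln_less_cancel_iff[of "2 ^ (L - 1)" "2 ^ D * exp (- X)"] by (simp add: ln_mult ln_realpow)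
    then have less: "X < (real D - real (L - 1)) * ln 2" by (simp add: algebra_simps)
    have "X \<ge> 0" using D by (simp add: X_def)
    then have pos: "real D - real (L - 1) > 0"
      using less mult_nonpos_nonneg[of "real D - real (L - 1)" "ln 2"] by fastforce
    have "ln (2::real) \<le> 1" using ln_le_minus_one[of 2] by simp
    then have "(real D - real (L - 1)) * ln 2 \<le> real D - real (L - 1)"
      using pos by (intro mult_left_le) auto
    with less have "X \<le> real D - real (L - 1)" by simp
    then show ?thesis using False by (simp add: X_def L_def of_nat_diff)
  qed
qed

lemma set_pairs_lex: "set (pairs_lex n) = {(i, j). 1 \<le> i \<and> i < j \<and> j \<le> n}"
proof -
  have "set (pairs_lex n) = (\<Union>i\<in>{1..<Suc n}. Pair i ` {Suc i..<Suc n})"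
    by (simp add: pairs_lex_def del: upt_Suc)
  also have "\<dots> = {(i, j). 1 \<le> i \<and> i < j \<and> j \<le> n}"
    by (auto intro!: UN_I)
  finally show ?thesis .
qed

lemma distinct_pairs_lex: "distinct (pairs_lex n)"
proof -
  have "distinct (concat (map (\<lambda>i. map (Pair i) (L i)) xs))"
    if "distinct xs" "\<forall>i\<in>set xs. distinct (L i)" for xs and L :: "nat \<Rightarrow> nat list"
    using that by (induction xs) (auto simp: distinct_map inj_on_def)
  then show ?thesis unfolding pairs_lex_def by simp
qed

lemma length_pairs_lex: "length (pairs_lex n) = n * (n - 1) div 2"
proof -
  have "length (pairs_lex n) = (\<Sum>i\<leftarrow>[1..<Suc n]. n - i)"
    by (simp add: pairs_lex_def length_concat o_def del: upt_Suc)
  moreover have "2 * (\<Sum>i\<leftarrow>[1..<Suc n]. n - i) = n * (n - 1)"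
  proof (induction n)
    case (Suc n)
    have "(\<Sum>i\<leftarrow>[1..<Suc (Suc n)]. Suc n - i) = (\<Sum>i\<leftarrow>[1..<Suc n]. Suc n - i)"
      by simp
    also have "\<dots> = (\<Sum>i\<leftarrow>[1..<Suc n]. n - i) + length [1..<Suc n]"
    proof -
      have "(\<Sum>i\<leftarrow>xs. Suc n - i) = (\<Sum>i\<leftarrow>xs. n - i) + length xs" if "\<forall>i\<in>set xs. i \<le> n" for xs
        using that by (induction xs) (auto simp: Suc_diff_le)
      then show ?thesis by simp
    qed
    finally show ?case using Suc by (cases n) (auto simp: algebra_simps)
  qed simp
  ultimately show ?thesis by simp
qed

lemma card_pairs_lex: "card (set (pairs_lex n)) = n * (n - 1) div 2"
  using distinct_card[OF distinct_pairs_lex] length_pairs_lex by simp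

lemma adj_commute: "adj G u v = adj G v u"
  by (auto simp: adj_def)

lemma labeled_graph_adj: "labeled_graph n G \<Longrightarrow> adj G u v \<Longrightarrow> u \<in> {1..n} \<and> v \<in> {1..n} \<and> u \<noteq> v"
  by (auto simp: labeled_graph_def adj_def)

lemma labeled_graph_nbrs: "labeled_graph n G \<Longrightarrow> nbrs G u \<subseteq> {1..n} - {u}"
  by (auto simp: nbrs_def dest: labeled_graph_adj)

lemma E_eq_map_adj: "labeled_graph n G \<Longrightarrow> E n G = map (\<lambda>(i, j). adj G i j) (pairs_lex n)"
  unfolding E_def by (auto simp: adj_def labeled_graph_def set_pairs_lex intro!: map_cong)

lemma card_pairs_between:
  assumes "A \<subseteq> {1..n}" "B \<subseteq> {1..n}" "A \<inter> B = {}"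
  shows "card {(i, j) \<in> set (pairs_lex n). (i \<in> A \<and> j \<in> B) \<or> (i \<in> B \<and> j \<in> A)} = card A * card B"
proof -
  let ?sort = "\<lambda>(a, b). (min a b, max a b :: nat)"
  have image: "?sort ` (A \<times> B) = {(i, j) \<in> set (pairs_lex n). (i \<in> A \<and> j \<in> B) \<or> (i \<in> B \<and> j \<in> A)}"
  proof (intro set_eqI iffI)
    fix x assume "x \<in> ?sort ` (A \<times> B)"
    then obtain a b where ab: "a \<in> A" "b \<in> B" "x = ?sort (a, b)" by auto
    have "a \<noteq> b" using ab assms(3) by auto
    then show "x \<in> {(i, j) \<in> set (pairs_lex n). (i \<in> A \<and> j \<in> B) \<or> (i \<in> B \<and> j \<in> A)}"
      using ab assms(1,2) by (auto simp: set_pairs_lex min_def max_def)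
  next
    fix x assume "x \<in> {(i, j) \<in> set (pairs_lex n). (i \<in> A \<and> j \<in> B) \<or> (i \<in> B \<and> j \<in> A)}"
    then obtain i j where "x = (i, j)" "i < j" "(i \<in> A \<and> j \<in> B) \<or> (i \<in> B \<and> j \<in> A)"
      by (auto simp: set_pairs_lex)
    then show "x \<in> ?sort ` (A \<times> B)"
    proof (elim disjE)
      assume "i \<in> A \<and> j \<in> B"
      with \<open>x = (i, j)\<close> \<open>i < j\<close> show ?thesis by (intro image_eqI[of _ _ "(i, j)"]) auto
    next
      assume "i \<in> B \<and> j \<in> A"
      with \<open>x = (i, j)\<close> \<open>i < j\<close> show ?thesis by (intro image_eqI[of _ _ "(j, i)"]) auto
    qed
  qed
  have "inj_on ?sort (A \<times> B)"
    using assms(3) by (auto simp: inj_on_def min_def max_def split: if_splits)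
  then show ?thesis
    unfolding image[symmetric] by (simp add: card_image card_cartesian_product)
qed

definition cut_pair :: "graph \<Rightarrow> nat \<Rightarrow> nat \<Rightarrow> nat \<Rightarrow> bool" where
  "cut_pair G u i j \<longleftrightarrow> (adj G u i \<and> j \<noteq> u \<and> \<not> adj G u j) \<or> (adj G u j \<and> i \<noteq> u \<and> \<not> adj G u i)"

lemma card_cut_pairs:
  assumes G: "labeled_graph n G" and u: "u \<in> {1..n}"
  shows "card {(i, j) \<in> set (pairs_lex n). cut_pair G u i j} = card (nbrs G u) * (n - 1 - card (nbrs G u))"
proof -
  define M where "M = {1..n} - {u} - nbrs G u"
  have N: "nbrs G u \<subseteq> {1..n} - {u}" using labeled_graph_nbrs[OF G] .
  have "{(i, j) \<in> set (pairs_lex n). cut_pair G u i j}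
      = {(i, j) \<in> set (pairs_lex n). (i \<in> nbrs G u \<and> j \<in> M) \<or> (i \<in> M \<and> j \<in> nbrs G u)}"
    using N by (auto simp: cut_pair_def M_def nbrs_def set_pairs_lex)
  also have "card \<dots> = card (nbrs G u) * card M"
    using N by (intro card_pairs_between) (auto simp: M_def)
  also have "card M = n - 1 - card (nbrs G u)"
    using N u by (simp add: M_def card_Diff_subset finite_subset)
  finally show ?thesis .
qed

definition other_nodes :: "nat \<Rightarrow> nat \<Rightarrow> nat list" where
  "other_nodes n u = filter (\<lambda>v. v \<noteq> u) [1..<Suc n]"

definition other_index :: "nat \<Rightarrow> nat \<Rightarrow> nat" where
  "other_index u v = (if v < u then v - 1 else v - 2)"

lemma computable_other_index[computable_intros]:
  "computable k a \<Longrightarrow> computable k b \<Longrightarrow> computable k (\<lambda>xs. other_index (a xs) (b xs))"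
  unfolding other_index_def by (intro computable_intros)

lemma other_nodes_eq: "u \<in> {1..n} \<Longrightarrow> other_nodes n u = [1..<u] @ [Suc u..<Suc n]"
proof -
  assume u: "u \<in> {1..n}"
  have "[1..<Suc n] = [1..<u] @ [u..<u + (Suc n - u)]"
    using u upt_add_eq_append[of 1 u "Suc n - u"] by simp
  also have "[u..<u + (Suc n - u)] = u # [Suc u..<Suc n]"
    using u by (simp add: upt_conv_Cons del: upt_Suc)
  finally show ?thesis by (simp add: other_nodes_def del: upt_Suc)
qed

lemma length_other_nodes: "u \<in> {1..n} \<Longrightarrow> length (other_nodes n u) = n - 1"
  by (simp add: other_nodes_eq del: upt_Suc)

lemma nth_other_nodes:
  assumes "u \<in> {1..n}" "v \<in> {1..n}" "v \<noteq> u"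
  shows "other_index u v < n - 1" "other_nodes n u ! other_index u v = v"
  using assms by (auto simp: other_nodes_eq other_index_def nth_append simp del: upt_Suc)

definition adj_row :: "nat \<Rightarrow> graph \<Rightarrow> nat \<Rightarrow> bool list" where
  "adj_row n G u = map (adj G u) (other_nodes n u)"

lemma length_adj_row: "u \<in> {1..n} \<Longrightarrow> length (adj_row n G u) = n - 1"
  by (simp add: adj_row_def length_other_nodes)

lemma count_adj_row:
  assumes G: "labeled_graph n G" and u: "u \<in> {1..n}"
  shows "length (filter id (adj_row n G u)) = card (nbrs G u)"
proof -
  have "length (filter id (adj_row n G u)) = card {v \<in> set (other_nodes n u). adj G u v}"
    using distinct_card[of "filter (adj G u) (other_nodes n u)"]
    by (simp add: adj_row_def filter_map o_def other_nodes_def)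
  also have "{v \<in> set (other_nodes n u). adj G u v} = nbrs G u"
    using labeled_graph_nbrs[OF G, of u] by (auto simp: other_nodes_def nbrs_def)
  finally show ?thesis .
qed

lemma nbrs_le:
  assumes "labeled_graph n G" "u \<in> {1..n}" shows "card (nbrs G u) \<le> n - 1"
proof -
  have "card (nbrs G u) \<le> card ({1..n} - {u})" by (intro card_mono labeled_graph_nbrs assms) simp
  then show ?thesis using assms(2) by simp
qed

lemma on_shortest_path_distance_2:
  assumes "u \<noteq> v" "\<not> adj G u v" "adj G u w" "adj G u w'" "adj G w' v"
  shows "on_shortest_path G u v w \<longleftrightarrow> adj G w v"
proof
  assume "on_shortest_path G u v w"
  then obtain k where k: "(w, v) \<in> adjrel G ^^ k" "\<forall>j\<le>k. (u, v) \<notin> adjrel G ^^ j"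
    unfolding on_shortest_path_def by blast
  have "(u, v) \<in> adjrel G ^^ 2"
    using assms(4,5) by (auto simp: adjrel_def numeral_2_eq_2 intro: relpow_Suc_I)
  with k(2) have "k < 2" by (meson not_le)
  with k(1) assms(1-3) show "adj G w v"
    by (auto simp: adjrel_def less_2_cases_iff)
next
  assume "adj G w v"
  then have "(w, v) \<in> adjrel G ^^ 1" by (simp add: adjrel_def)
  moreover have "(u, v) \<notin> adjrel G ^^ j" if "j \<le> 1" for j
    using that assms(1,2) by (auto simp: adjrel_def le_Suc_eq)
  ultimately show "on_shortest_path G u v w"
    unfolding on_shortest_path_def using assms(3) by blast
qed

definition edges_outside :: "(nat \<Rightarrow> nat \<Rightarrow> bool) \<Rightarrow> nat \<Rightarrow> graph \<Rightarrow> bool list" where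
  "edges_outside P n G = map (\<lambda>(i, j). adj G i j) (filter (\<lambda>(i, j). \<not> P i j) (pairs_lex n))"

lemma length_edges_outside:
  "length (edges_outside P n G) = n * (n - 1) div 2 - card {(i, j) \<in> set (pairs_lex n). P i j}"
proof -
  have "length (filter (\<lambda>(i, j). \<not> P i j) (pairs_lex n))
      = length (pairs_lex n) - length (filter (\<lambda>(i, j). P i j) (pairs_lex n))"
    using sum_length_filter_compl[of "\<lambda>(i, j). P i j" "pairs_lex n"] by (simp add: split_def)
  moreover have "{(i, j) \<in> set (pairs_lex n). P i j} = set (filter (\<lambda>(i, j). P i j) (pairs_lex n))"
    by auto
  then have "length (filter (\<lambda>(i, j). P i j) (pairs_lex n)) = card {(i, j) \<in> set (pairs_lex n). P i j}"
    using distinct_card[of "filter (\<lambda>(i, j). P i j) (pairs_lex n)"] distinct_pairs_lex by simp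
  ultimately show ?thesis by (simp add: edges_outside_def length_pairs_lex)
qed

definition fill_pairs_code :: "(nat \<Rightarrow> nat \<Rightarrow> bool) \<Rightarrow> (nat \<Rightarrow> nat \<Rightarrow> bool) \<Rightarrow> nat \<Rightarrow> nat \<Rightarrow> nat" where
  "fill_pairs_code P f n r = merge_code (pairs_code (\<lambda>i j. Suc (if P i j then 1 else 0)) n)
     (pairs_code (\<lambda>i j. if P i j then Suc (if f i j then 1 else 0) else 0) n) r"

lemma computable_fill_pairs_code[computable_intros]:
  assumes "decidable (Suc (Suc k)) (\<lambda>ys. P (ys!0) (ys!1) (drop 2 ys))"
    and "decidable (Suc (Suc k)) (\<lambda>ys. f (ys!0) (ys!1) (drop 2 ys))"
    and "computable k N" "computable k r"
  shows "computable k (\<lambda>xs. fill_pairs_code (\<lambda>i j. P i j xs) (\<lambda>i j. f i j xs) (N xs) (r xs))"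
  unfolding fill_pairs_code_def by (intro computable_intros assms)

lemma fill_pairs_code_E:
  assumes G: "labeled_graph n G"
    and P: "\<And>i j. (i, j) \<in> set (pairs_lex n) \<Longrightarrow> P i j \<longleftrightarrow> Q i j"
    and f: "\<And>i j. (i, j) \<in> set (pairs_lex n) \<Longrightarrow> Q i j \<Longrightarrow> f i j \<longleftrightarrow> adj G i j"
  shows "fill_pairs_code P f n (bcode (edges_outside Q n G @ rest)) = bcode (E n G)"
proof -
  let ?Q = "\<lambda>(i, j). Q i j"
  have "map (\<lambda>(i, j). P i j) (pairs_lex n) = map ?Q (pairs_lex n)"
    and "filter (\<lambda>(i, j). P i j) (pairs_lex n) = filter ?Q (pairs_lex n)"
    and "filter (\<lambda>(i, j). \<not> Q i j) (pairs_lex n) = filter (\<lambda>x. \<not> ?Q x) (pairs_lex n)"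
    using P by (auto intro!: map_cong filter_cong)
  then have "fill_pairs_code P f n (bcode (edges_outside Q n G @ rest))
      = merge_code (bcode (map ?Q (pairs_lex n))) (bcode (map (\<lambda>(i, j). f i j) (filter ?Q (pairs_lex n))))
          (bcode (map (\<lambda>(i, j). adj G i j) (filter (\<lambda>x. \<not> ?Q x) (pairs_lex n)) @ rest))"
    by (simp only: fill_pairs_code_def pairs_code_map pairs_code_filter edges_outside_def)
  also have "\<dots> = bcode (map (\<lambda>x. if ?Q x then (\<lambda>(i, j). f i j) x else (\<lambda>(i, j). adj G i j) x) (pairs_lex n))"
    by (rule merge_code_bcode)
  also have "\<dots> = bcode (E n G)"
    using f by (auto simp: E_eq_map_adj[OF G] intro!: arg_cong[where f=bcode] map_cong)
  finally show ?thesis .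
qed

lemma nth_code_bcode_append:
  "k < length ys \<Longrightarrow> nth_code (bcode (xs @ ys @ zs)) (length xs + k) = (if ys ! k then 1 else 0)"
  by (simp add: nth_append)

subsection \<open>Describing a graph by the degree of one node\<close>

definition degree_description :: "nat \<Rightarrow> graph \<Rightarrow> nat \<Rightarrow> bool list" where
  "degree_description n G u = (let W = bit_width n; d = card (nbrs G u) in
     nat_bits W u @ nat_bits W d @
     nat_bits (ceil_log2 (num_weight_codes (n - 1) d)) (rank_code (n - 1) d (bcode (adj_row n G u))) @
     edges_outside (\<lambda>i j. i = u \<or> j = u) n G)"

definition degree_decoder :: "nat \<Rightarrow> nat \<Rightarrow> nat" where
  "degree_decoder p y = (let n = length_code y; W = bit_width n; u = read_code p 0 W; d = read_code p W W;
     L = ceil_log2 (num_weight_codes (n - 1) d); row = unrank_code (n - 1) d (read_code p (2 * W) L) in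
     fill_pairs_code (\<lambda>i j. i = u \<or> j = u) (\<lambda>i j. nth_code row (other_index u (if i = u then j else i)) = 1)
       n (drop_code (2 * W + L) p))"

lemma computable_degree_decoder: "computable 2 (\<lambda>xs. degree_decoder (xs!0) (xs!1))"
  unfolding degree_decoder_def Let_def by (intro computable_intros | simp)+

lemma length_degree_description:
  assumes "u \<in> {1..n}"
  shows "length (degree_description n G u)
    = 2 * bit_width n + ceil_log2 (num_weight_codes (n - 1) (card (nbrs G u))) + (n * (n - 1) div 2 - (n - 1))"
proof -
  have "{(i, j) \<in> set (pairs_lex n). i = u \<or> j = u}
      = {(i, j) \<in> set (pairs_lex n). (i \<in> {u} \<and> j \<in> {1..n} - {u}) \<or> (i \<in> {1..n} - {u} \<and> j \<in> {u})}"
    by (auto simp: set_pairs_lex)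
  also have "card \<dots> = n - 1"
    using card_pairs_between[of "{u}" n "{1..n} - {u}"] assms by simp
  finally show ?thesis by (simp add: degree_description_def Let_def length_edges_outside)
qed

lemma nth_adj_row_code:
  assumes u: "u \<in> {1..n}" and ij: "(i, j) \<in> set (pairs_lex n)" "i = u \<or> j = u"
  shows "nth_code (bcode (adj_row n G u)) (other_index u (if i = u then j else i)) = 1 \<longleftrightarrow> adj G i j"
proof -
  define v where "v = (if i = u then j else i)"
  have v: "v \<in> {1..n}" "v \<noteq> u" using ij u by (auto simp: set_pairs_lex v_def)
  have "nth_code (bcode (adj_row n G u)) (other_index u v) = 1 \<longleftrightarrow> adj G u v"
    using nth_other_nodes[OF u v] length_other_nodes[OF u] by (simp add: adj_row_def)
  then show ?thesis using ij by (auto simp: v_def adj_commute)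
qed

lemma degree_decoder_correct:
  assumes G: "labeled_graph n G" and u: "u \<in> {1..n}"
  shows "degree_decoder (bcode (degree_description n G u)) (bcode (unary n)) = bcode (E n G)"
proof -
  define W where "W = bit_width n"
  define d where "d = card (nbrs G u)"
  define row where "row = bcode (adj_row n G u)"
  define L where "L = ceil_log2 (num_weight_codes (n - 1) d)"
  define r where "r = rank_code (n - 1) d row"
  define rest where "rest = edges_outside (\<lambda>i j. i = u \<or> j = u) n G"
  define p where "p = bcode (degree_description n G u)"
  have p: "p = bcode (nat_bits W u @ nat_bits W d @ nat_bits L r @ rest)"
    by (simp add: p_def degree_description_def Let_def W_def d_def L_def r_def row_def rest_def)
  have W: "n < 2 ^ W" using bit_width by (simp add: W_def)
  have weight: "weight_code (n - 1) d row"
    using count_adj_row[OF G u] length_adj_row[OF u] by (simp add: weight_code_bcode row_def d_def)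
  have "u < 2 ^ W" "d < 2 ^ W" using u nbrs_le[OF G u] W by (auto simp: d_def)
  then have hu: "read_code p 0 W = u" and hd: "read_code p W W = d"
    using read_code_nat_bits[of _ W "[]"] read_code_nat_bits[of d W "nat_bits W u"] by (simp_all add: p)
  have hr: "read_code p (2 * W) L = r"
    using read_code_nat_bits[of r L "nat_bits W u @ nat_bits W d"] rank_code_less[OF weight] ceil_log2
    by (simp add: p mult_2 r_def L_def order_less_le_trans)
  have hrow: "unrank_code (n - 1) d r = row" unfolding r_def by (rule unrank_rank_code[OF weight])
  have hrest: "drop_code (2 * W + L) p = bcode (rest @ [])" by (simp add: p mult_2)
  have hn: "length_code (bcode (unary n)) = n" by (simp add: unary_def)
  have "degree_decoder p (bcode (unary n))
      = fill_pairs_code (\<lambda>i j. i = u \<or> j = u) (\<lambda>i j. nth_code row (other_index u (if i = u then j else i)) = 1)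
          n (bcode (rest @ []))"
    unfolding degree_decoder_def Let_def hn W_def[symmetric] hu hd L_def[symmetric] hr hrow hrest ..
  also have "\<dots> = bcode (E n G)"
    unfolding rest_def row_def using nth_adj_row_code[OF u] by (intro fill_pairs_code_E[OF G refl])
  finally show ?thesis by (simp add: p_def)
qed

subsection \<open>Describing a graph by a routing table\<close>

definition listed_table :: "nat \<Rightarrow> (nat \<Rightarrow> nat \<Rightarrow> nat set) \<Rightarrow> nat \<Rightarrow> (nat \<Rightarrow> nat) \<Rightarrow> nat \<Rightarrow> bool list" where
  "listed_table n R u \<sigma> m = concat (map (\<lambda>v. map (\<lambda>l. \<sigma> l \<in> R u v) [0..<m]) (other_nodes n u))"

lemma rt_table_eq_listed_table: "rt_table n R u = listed_table n R u Suc n"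
  unfolding rt_table_def listed_table_def other_nodes_def
  by (simp add: map_Suc_upt[symmetric] o_def del: upt_Suc)

lemma port_table_eq_listed_table: "port_table n R u m \<pi> = listed_table n R u \<pi> m"
  unfolding port_table_def listed_table_def other_nodes_def by simp

lemma nth_concat_blocks:
  assumes "\<forall>y\<in>set ys. length (F y) = m" "k < length ys" "l < m"
  shows "concat (map F ys) ! (k * m + l) = F (ys ! k) ! l"
  using assms
proof (induction ys arbitrary: k)
  case (Cons y ys)
  then show ?case by (cases k) (auto simp: nth_append add.assoc)
qed simp

lemma length_listed_table: "u \<in> {1..n} \<Longrightarrow> length (listed_table n R u \<sigma> m) = (n - 1) * m"
  by (simp add: listed_table_def length_concat o_def sum_list_triv length_other_nodes)

lemma nth_listed_table:
  assumes u: "u \<in> {1..n}" and v: "v \<in> {1..n}" "v \<noteq> u" and l: "l < m"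
  shows "other_index u v * m + l < length (listed_table n R u \<sigma> m)"
    and "listed_table n R u \<sigma> m ! (other_index u v * m + l) \<longleftrightarrow> \<sigma> l \<in> R u v"
proof -
  have "other_index u v * m + l < Suc (other_index u v) * m" using l by simp
  also have "\<dots> \<le> (n - 1) * m" using nth_other_nodes(1)[OF u v] by (intro mult_right_mono) auto
  finally show "other_index u v * m + l < length (listed_table n R u \<sigma> m)"
    using length_listed_table[OF u] by simp
  show "listed_table n R u \<sigma> m ! (other_index u v * m + l) \<longleftrightarrow> \<sigma> l \<in> R u v"
    unfolding listed_table_def
    by (subst nth_concat_blocks) (use nth_other_nodes[OF u v] length_other_nodes[OF u] l in auto)
qed

lemma listed_table_determines_edge:
  assumes R: "full_info_sp_scheme n G R" and u: "u \<in> {1..n}"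
    and v: "v \<in> {1..n}" "v \<noteq> u" "\<not> adj G u v" and w: "adj G u w" and listed: "\<exists>l<m. \<sigma> l = w"
  shows "(\<exists>w'. adj G u w' \<and> adj G w' v) \<and> (\<exists>l<m. \<sigma> l = w \<and> listed_table n R u \<sigma> m ! (other_index u v * m + l))
    \<longleftrightarrow> adj G w v"
proof -
  have "(\<exists>l<m. \<sigma> l = w \<and> listed_table n R u \<sigma> m ! (other_index u v * m + l)) \<longleftrightarrow> w \<in> R u v"
    using nth_listed_table(2)[OF u v(1,2)] listed by auto
  also have "\<dots> \<longleftrightarrow> on_shortest_path G u v w"
    using R u v(1,2) by (simp add: full_info_sp_scheme_def)
  finally have listed: "(\<exists>l<m. \<sigma> l = w \<and> listed_table n R u \<sigma> m ! (other_index u v * m + l))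
      \<longleftrightarrow> on_shortest_path G u v w" .
  show ?thesis
  proof
    assume "(\<exists>w'. adj G u w' \<and> adj G w' v) \<and> (\<exists>l<m. \<sigma> l = w \<and> listed_table n R u \<sigma> m ! (other_index u v * m + l))"
    then show "adj G w v" using listed on_shortest_path_distance_2[OF v(2)[symmetric] v(3) w] by blast
  next
    assume "adj G w v"
    then show "(\<exists>w'. adj G u w' \<and> adj G w' v) \<and> (\<exists>l<m. \<sigma> l = w \<and> listed_table n R u \<sigma> m ! (other_index u v * m + l))"
      using listed on_shortest_path_distance_2[OF v(2)[symmetric] v(3) w w] w by blast
  qed
qed

definition routing_description ::
  "nat \<Rightarrow> graph \<Rightarrow> nat \<Rightarrow> (nat \<Rightarrow> nat) \<Rightarrow> nat \<Rightarrow> bool list \<Rightarrow> bool list" where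
  "routing_description n G u \<sigma> m q = (let W = bit_width n in
     nat_bits W u @ map (adj G u) [1..<Suc n] @ map (\<lambda>v. \<exists>w. adj G u w \<and> adj G w v) [1..<Suc n] @
     nat_bits W m @ concat (map (\<lambda>l. nat_bits W (\<sigma> l)) [0..<m]) @ edges_outside (cut_pair G u) n G @ q)"

definition routing_cut_code :: "nat \<Rightarrow> nat \<Rightarrow> nat \<Rightarrow> nat \<Rightarrow> nat \<Rightarrow> bool" where
  "routing_cut_code p W u i j \<longleftrightarrow> (let nbr = (\<lambda>x. nth_code p (W + (x - 1)) = 1) in
     (nbr i \<and> j \<noteq> u \<and> \<not> nbr j) \<or> (nbr j \<and> i \<noteq> u \<and> \<not> nbr i))"

definition routing_decoder :: "nat \<Rightarrow> nat \<Rightarrow> nat \<Rightarrow> nat" where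
  "routing_decoder t p y = (let n = length_code y; W = bit_width n; u = read_code p 0 W;
     m = read_code p (W + 2 * n) W;
     nbr = (\<lambda>x. nth_code p (W + (x - 1)) = 1);
     near = (\<lambda>v. nth_code p (W + n + (v - 1)) = 1);
     \<sigma> = (\<lambda>l. read_code p (2 * W + 2 * n + l * W) W);
     edge = (\<lambda>w v. near v \<and> (\<exists>l<m. \<sigma> l = w \<and> nth_code t (other_index u v * m + l) = 1)) in
     fill_pairs_code (routing_cut_code p W u) (\<lambda>i j. edge (if nbr i then i else j) (if nbr i then j else i)) n
       (drop_code (2 * W + 2 * n + m * W) p))"

definition routing_subprogram :: "nat \<Rightarrow> nat \<Rightarrow> nat" where
  "routing_subprogram p y = (let n = length_code y; W = bit_width n; u = read_code p 0 W;
     m = read_code p (W + 2 * n) W;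
     cut = count_code (pairs_code (\<lambda>i j. Suc (if routing_cut_code p W u i j then 1 else 0)) n) in
     drop_code (2 * W + 2 * n + m * W + (n * (n - 1) div 2 - cut)) p)"

definition routing_condition :: "nat \<Rightarrow> nat \<Rightarrow> nat" where
  "routing_condition p y = (let n = length_code y; W = bit_width n in
     triple_code (unary_code n) (unary_code (read_code p 0 W)) (take_code n (drop_code W p)))"

lemma computable_routing_decoder: "computable 3 (\<lambda>xs. routing_decoder (xs!0) (xs!1) (xs!2))"
  unfolding routing_decoder_def routing_cut_code_def Let_def by (intro computable_intros | simp)+

lemma computable_routing_subprogram: "computable 2 (\<lambda>xs. routing_subprogram (xs!0) (xs!1))"
  unfolding routing_subprogram_def routing_cut_code_def Let_def by (intro computable_intros | simp)+

lemma computable_routing_condition: "computable 2 (\<lambda>xs. routing_condition (xs!0) (xs!1))"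
  unfolding routing_condition_def Let_def by (intro computable_intros | simp)+

lemma length_routing_description:
  assumes "labeled_graph n G" "u \<in> {1..n}"
  shows "length (routing_description n G u \<sigma> m q) = 2 * bit_width n + 2 * n + m * bit_width n
    + (n * (n - 1) div 2 - card (nbrs G u) * (n - 1 - card (nbrs G u))) + length q"
  using card_cut_pairs[OF assms]
  by (simp add: routing_description_def Let_def length_edges_outside length_concat o_def sum_list_triv)

context
  fixes n :: nat and G :: graph and u :: nat and \<sigma> :: "nat \<Rightarrow> nat" and m :: nat and q :: "bool list"
  assumes u: "u \<in> {1..n}" and m: "m \<le> n" and \<sigma>: "\<And>l. l < m \<Longrightarrow> \<sigma> l \<in> {1..n}"
begin

lemma routing_description_header:
  defines "p \<equiv> bcode (routing_description n G u \<sigma> m q)" and "W \<equiv> bit_width n"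
  shows "read_code p 0 W = u"
    and "x \<in> {1..n} \<Longrightarrow> nth_code p (W + (x - 1)) = (if adj G u x then 1 else 0)"
    and "v \<in> {1..n} \<Longrightarrow> nth_code p (W + n + (v - 1)) = (if \<exists>w. adj G u w \<and> adj G w v then 1 else 0)"
    and "read_code p (W + 2 * n) W = m"
proof -
  define A where "A = map (adj G u) [1..<Suc n]"
  define H where "H = map (\<lambda>v. \<exists>w. adj G u w \<and> adj G w v) [1..<Suc n]"
  define rest where "rest = concat (map (\<lambda>l. nat_bits W (\<sigma> l)) [0..<m]) @ edges_outside (cut_pair G u) n G @ q"
  have p: "p = bcode (nat_bits W u @ A @ H @ nat_bits W m @ rest)"
    by (simp add: p_def routing_description_def Let_def W_def A_def H_def rest_def)
  have lengths: "length A = n" "length H = n"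
    by (simp_all add: A_def H_def)
  have W: "x \<le> n \<Longrightarrow> x < 2 ^ W" for x
    using bit_width[of n] by (auto simp: W_def)
  show "read_code p 0 W = u"
    using read_code_nat_bits[of u W "[]"] W[of u] u by (simp add: p)
  show "nth_code p (W + (x - 1)) = (if adj G u x then 1 else 0)" if x: "x \<in> {1..n}"
  proof -
    have "nth_code p (length (nat_bits W u) + (x - 1)) = (if A ! (x - 1) then 1 else 0)"
      unfolding p by (rule nth_code_bcode_append) (use x lengths in auto)
    then show ?thesis using x by (auto simp: A_def simp del: upt_Suc)
  qed
  show "nth_code p (W + n + (v - 1)) = (if \<exists>w. adj G u w \<and> adj G w v then 1 else 0)" if v: "v \<in> {1..n}"
  proof -
    have "p = bcode ((nat_bits W u @ A) @ H @ nat_bits W m @ rest)" by (simp add: p)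
    then have "nth_code p (length (nat_bits W u @ A) + (v - 1)) = (if H ! (v - 1) then 1 else 0)"
      by (simp only:) (rule nth_code_bcode_append, use v lengths in auto)
    then show ?thesis using v by (auto simp: H_def lengths simp del: upt_Suc)
  qed
  show "read_code p (W + 2 * n) W = m"
    using read_code_nat_bits[of m W "nat_bits W u @ A @ H"] W[of m] m u by (simp add: p lengths mult_2 add.assoc)
qed

lemma routing_description_listing:
  defines "W \<equiv> bit_width n"
  shows "l < m \<Longrightarrow> read_code (bcode (routing_description n G u \<sigma> m q)) (2 * W + 2 * n + l * W) W = \<sigma> l"
    and "drop (2 * W + 2 * n + m * W) (routing_description n G u \<sigma> m q) = edges_outside (cut_pair G u) n G @ q"
proof -
  define pre where "pre = nat_bits W u @ map (adj G u) [1..<Suc n] @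
    map (\<lambda>v. \<exists>w. adj G u w \<and> adj G w v) [1..<Suc n] @ nat_bits W m"
  define S where "S = (\<lambda>k. concat (map (\<lambda>l. nat_bits W (\<sigma> l)) [0..<k]))"
  define rest where "rest = edges_outside (cut_pair G u) n G @ q"
  have d: "routing_description n G u \<sigma> m q = pre @ S m @ rest"
    by (simp add: routing_description_def Let_def W_def pre_def S_def rest_def)
  have lengths: "length pre = 2 * W + 2 * n" "length (S k) = k * W" for k
    by (simp_all add: pre_def S_def length_concat o_def sum_list_triv)
  show "read_code (bcode (routing_description n G u \<sigma> m q)) (2 * W + 2 * n + l * W) W = \<sigma> l" if l: "l < m"
  proof -
    have "[0..<m] = [0..<l] @ l # [Suc l..<m]"
      using l upt_add_eq_append[of 0 l "m - l"] upt_conv_Cons[of l m] by simp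
    then have "routing_description n G u \<sigma> m q
        = (pre @ S l) @ nat_bits W (\<sigma> l) @ concat (map (\<lambda>l. nat_bits W (\<sigma> l)) [Suc l..<m]) @ rest"
      by (simp add: d S_def del: upt_Suc)
    moreover have "2 * W + 2 * n + l * W = length (pre @ S l)" by (simp add: lengths)
    moreover have "\<sigma> l < 2 ^ W"
      using bit_width[of n] \<sigma>[OF l] by (auto simp: W_def intro: le_less_trans)
    ultimately show ?thesis by (simp only: read_code_nat_bits)
  qed
  show "drop (2 * W + 2 * n + m * W) (routing_description n G u \<sigma> m q) = edges_outside (cut_pair G u) n G @ q"
    by (simp add: d lengths rest_def)
qed

lemma routing_cut_code_eq:
  assumes "(i, j) \<in> set (pairs_lex n)"
  shows "routing_cut_code (bcode (routing_description n G u \<sigma> m q)) (bit_width n) u i j \<longleftrightarrow> cut_pair G u i j"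
  using assms routing_description_header(2)[of i] routing_description_header(2)[of j]
  by (auto simp: routing_cut_code_def cut_pair_def set_pairs_lex)

lemma routing_subprogram_correct:
  "routing_subprogram (bcode (routing_description n G u \<sigma> m q)) (bcode (unary n)) = bcode q"
proof -
  let ?p = "bcode (routing_description n G u \<sigma> m q)" and ?W = "bit_width n"
  have "count_code (pairs_code (\<lambda>i j. Suc (if routing_cut_code ?p ?W u i j then 1 else 0)) n)
      = length (filter (\<lambda>(i, j). routing_cut_code ?p ?W u i j) (pairs_lex n))"
    by (simp add: pairs_code_map filter_map o_def)
  also have "filter (\<lambda>(i, j). routing_cut_code ?p ?W u i j) (pairs_lex n)
      = filter (\<lambda>(i, j). cut_pair G u i j) (pairs_lex n)"
    using routing_cut_code_eq by (auto intro: filter_cong)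
  finally have "count_code (pairs_code (\<lambda>i j. Suc (if routing_cut_code ?p ?W u i j then 1 else 0)) n)
      = length (filter (\<lambda>(i, j). cut_pair G u i j) (pairs_lex n))" .
  moreover have "length (filter (\<lambda>(i, j). cut_pair G u i j) (pairs_lex n)) + length (edges_outside (cut_pair G u) n G)
      = n * (n - 1) div 2"
    using sum_length_filter_compl[of "\<lambda>(i, j). cut_pair G u i j" "pairs_lex n"]
    by (simp add: edges_outside_def length_pairs_lex split_def)
  ultimately have "n * (n - 1) div 2 - count_code (pairs_code (\<lambda>i j. Suc (if routing_cut_code ?p ?W u i j then 1 else 0)) n)
      = length (edges_outside (cut_pair G u) n G)"
    by arith
  moreover have "length_code (bcode (unary n)) = n" by (simp add: unary_def)
  moreover have "drop (length (edges_outside (cut_pair G u) n G)) (drop (2 * ?W + 2 * n + m * ?W)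
      (routing_description n G u \<sigma> m q)) = q"
    by (simp add: routing_description_listing(2))
  ultimately show ?thesis
    by (simp add: routing_subprogram_def Let_def routing_description_header(1,4) add.commute)
qed

lemma routing_condition_correct:
  "routing_condition (bcode (routing_description n G u \<sigma> m q)) (bcode (unary n)) = bcode (node_info n G u)"
proof -
  have "take_code n (drop_code (bit_width n) (bcode (routing_description n G u \<sigma> m q)))
      = bcode (map (adj G u) [1..<Suc n])"
    using take_code_bcode[of "map (adj G u) [1..<Suc n]"]
    by (simp add: routing_description_def Let_def del: upt_Suc)
  then show ?thesis
    using routing_description_header(1)
    by (simp add: routing_condition_def Let_def unary_def triple_code_bcode node_info_def)
qed

lemma routing_decoder_correct:
  assumes G: "labeled_graph n G" and R: "full_info_sp_scheme n G R"
    and cover: "\<And>w. adj G u w \<Longrightarrow> \<exists>l<m. \<sigma> l = w"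
  shows "routing_decoder (bcode (listed_table n R u \<sigma> m)) (bcode (routing_description n G u \<sigma> m q))
      (bcode (unary n)) = bcode (E n G)"
proof -
  define p where "p = bcode (routing_description n G u \<sigma> m q)"
  define t where "t = bcode (listed_table n R u \<sigma> m)"
  define W where "W = bit_width n"
  note header = routing_description_header[folded p_def W_def]
  note listing = routing_description_listing[folded p_def W_def]
  define edge where "edge = (\<lambda>w v. nth_code p (W + n + (v - 1)) = 1 \<and>
    (\<exists>l<m. read_code p (2 * W + 2 * n + l * W) W = w \<and> nth_code t (other_index u v * m + l) = 1))"
  define nbr where "nbr = (\<lambda>x. nth_code p (W + (x - 1)) = 1)"
  have "edge w v \<longleftrightarrow> adj G w v"
    if w: "adj G u w" and v: "v \<in> {1..n}" "v \<noteq> u" "\<not> adj G u v" for w v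
  proof -
    have "nth_code t (other_index u v * m + l) = 1 \<longleftrightarrow> listed_table n R u \<sigma> m ! (other_index u v * m + l)"
      if "l < m" for l
      using nth_listed_table(1)[OF u v(1,2) that] by (simp add: t_def)
    then show ?thesis
      unfolding edge_def using header(3)[OF v(1)] listing(1) listed_table_determines_edge[OF R u v w cover[OF w]]
      by auto
  qed
  then have "edge (if nbr i then i else j) (if nbr i then j else i) \<longleftrightarrow> adj G i j"
    if "(i, j) \<in> set (pairs_lex n)" "cut_pair G u i j" for i j
    using that header(2) by (auto simp: nbr_def cut_pair_def set_pairs_lex adj_commute)
  then have fill: "fill_pairs_code (routing_cut_code p W u) (\<lambda>i j. edge (if nbr i then i else j) (if nbr i then j else i))
      n (bcode (edges_outside (cut_pair G u) n G @ q)) = bcode (E n G)"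
    by (intro fill_pairs_code_E[OF G]) (auto simp: routing_cut_code_eq p_def W_def)
  have hn: "length_code (bcode (unary n)) = n" by (simp add: unary_def)
  have hdrop: "drop_code (2 * W + 2 * n + m * W) p = bcode (edges_outside (cut_pair G u) n G @ q)"
    using listing(2) by (simp add: p_def)
  have "routing_decoder t p (bcode (unary n))
      = fill_pairs_code (routing_cut_code p W u) (\<lambda>i j. edge (if nbr i then i else j) (if nbr i then j else i))
          n (bcode (edges_outside (cut_pair G u) n G @ q))"
    unfolding routing_decoder_def Let_def hn W_def[symmetric] header(1,4) hdrop edge_def nbr_def ..
  with fill show ?thesis by (simp add: p_def t_def)
qed

end

section \<open>Upper bounds on Kolmogorov complexity from decoders\<close>

definition run_recf :: "recf \<Rightarrow> bool list \<Rightarrow> bool list \<Rightarrow> bool list option" where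
  "run_recf F p y = (if \<exists>z. eval F [bcode p, bcode y] z
     then Some (bdec (THE z. eval F [bcode p, bcode y] z)) else None)"

lemma run_recf_eval:
  assumes "eval F [bcode p, bcode y] z" shows "run_recf F p y = Some (bdec z)"
proof -
  have "(THE z. eval F [bcode p, bcode y] z) = z" using assms eval_deterministic by blast
  then show ?thesis using assms by (auto simp: run_recf_def)
qed

lemma partrec2_run_recf: "partrec2 (run_recf F)"
  unfolding partrec2_def
proof (intro exI[of _ F] allI iffI)
  fix p y z assume run: "run_recf F p y = Some z"
  then obtain z' where "eval F [bcode p, bcode y] z'" by (auto simp: run_recf_def split: if_splits)
  with run show "eval F [bcode p, bcode y] (bcode z)" by (metis bcode_bdec option.inject run_recf_eval)
next
  fix p y z assume "eval F [bcode p, bcode y] (bcode z)"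
  from run_recf_eval[OF this] show "run_recf F p y = Some z" by simp
qed

lemma KC_le: "U q y = Some x \<Longrightarrow> KC U x y \<le> length q"
  unfolding KC_def by (rule Least_le) blast

lemma KC_attained:
  assumes "U q y = Some x" shows "\<exists>q'. U q' y = Some x \<and> length q' = KC U x y"
proof -
  have "\<exists>p. length p = (LEAST m. \<exists>p. length p = m \<and> U p y = Some x) \<and> U p y = Some x"
    by (rule LeastI_ex) (use assms in blast)
  then show ?thesis unfolding KC_def by blast
qed

lemma KC_le_eval:
  assumes "universal U"
  obtains c where "\<And>p y x. eval F [bcode p, bcode y] (bcode x) \<Longrightarrow> KC U x y \<le> length p + c"
proof -
  obtain c where c: "\<And>p y x. run_recf F p y = Some x \<Longrightarrow> \<exists>q. U q y = Some x \<and> length q \<le> length p + c"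
    using assms partrec2_run_recf[of F] unfolding universal_def by blast
  show ?thesis
  proof (rule that)
    fix p y x assume "eval F [bcode p, bcode y] (bcode x)"
    then have "run_recf F p y = Some x" using run_recf_eval by fastforce
    then obtain q where "U q y = Some x" "length q \<le> length p + c" using c by blast
    then show "KC U x y \<le> length p + c" using KC_le le_trans by blast
  qed
qed

lemma universal_surj:
  assumes "universal U" shows "\<exists>q. U q y = Some x"
proof -
  have "run_recf (const_recf (bcode x)) [] y = Some x"
    using run_recf_eval[OF eval_const_recf] by simp
  then show ?thesis
    using assms partrec2_run_recf[of "const_recf (bcode x)"] unfolding universal_def by blast
qed

lemma KC_le_decoder:
  assumes "universal U" "computable 2 (\<lambda>xs. D (xs!0) (xs!1))"
  obtains c where "\<And>p y x. D (bcode p) (bcode y) = bcode x \<Longrightarrow> KC U x y \<le> length p + c"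
proof -
  obtain F where F: "\<And>xs. length xs = 2 \<Longrightarrow> eval F xs (D (xs!0) (xs!1))"
    using assms(2) unfolding computable_def by blast
  have "eval F [bcode p, bcode y] (D (bcode p) (bcode y))" for p y
    using F[of "[bcode p, bcode y]"] by simp
  with KC_le_eval[OF assms(1), of F] that show ?thesis by metis
qed

text \<open>The decoder may extract a program \<open>q\<close> and a condition \<open>z\<close> from the description and use the
  output \<open>t\<close> of \<open>U\<close> on them: since \<open>U\<close> is itself partial recursive, this costs only a constant.\<close>

lemma KC_le_decoder_subprogram:
  assumes U: "universal U" and dec: "computable 3 (\<lambda>xs. dec (xs!0) (xs!1) (xs!2))"
    and prog: "computable 2 (\<lambda>xs. prog (xs!0) (xs!1))" and cond: "computable 2 (\<lambda>xs. cond (xs!0) (xs!1))"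
  obtains c where "\<And>p y x q z t. prog (bcode p) (bcode y) = bcode q \<Longrightarrow> cond (bcode p) (bcode y) = bcode z \<Longrightarrow>
    U q z = Some t \<Longrightarrow> dec (bcode t) (bcode p) (bcode y) = bcode x \<Longrightarrow> KC U x y \<le> length p + c"
proof -
  obtain fU where fU: "\<And>p y z. U p y = Some z \<longleftrightarrow> eval fU [bcode p, bcode y] (bcode z)"
    using U unfolding universal_def partrec2_def by blast
  obtain rd rp rc where rd: "\<And>xs. length xs = 3 \<Longrightarrow> eval rd xs (dec (xs!0) (xs!1) (xs!2))"
    and rp: "\<And>xs. length xs = 2 \<Longrightarrow> eval rp xs (prog (xs!0) (xs!1))"
    and rc: "\<And>xs. length xs = 2 \<Longrightarrow> eval rc xs (cond (xs!0) (xs!1))"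
    using dec prog cond unfolding computable_def by metis
  define F where "F = Cn rd [Cn fU [rp, rc], Id 0, Id 1]"
  have "eval F [a, b] (dec t a b)" if "eval fU [prog a b, cond a b] t" for a b t
  proof -
    have "eval (Cn fU [rp, rc]) [a, b] t"
      using rp[of "[a, b]"] rc[of "[a, b]"] that by (auto intro: ev_Cn[where ys="[prog a b, cond a b]"])
    moreover have "eval rd [t, a, b] (dec t a b)" using rd[of "[t, a, b]"] by simp
    ultimately show ?thesis
      unfolding F_def by (auto intro!: ev_Cn[where ys="[t, a, b]"] ev_Id[of 0 "[a, b]", simplified]
          ev_Id[of 1 "[a, b]", simplified])
  qed
  with fU have "eval F [bcode p, bcode y] (bcode x)"
    if "prog (bcode p) (bcode y) = bcode q" "cond (bcode p) (bcode y) = bcode z" "U q z = Some t"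
      "dec (bcode t) (bcode p) (bcode y) = bcode x" for p y x q z t
    using that by metis
  with KC_le_eval[OF U, of F] that show ?thesis by metis
qed

section \<open>Routing tables of random graphs\<close>

lemma KC_E_le_degree_description:
  assumes "universal U"
  obtains c :: nat where
    "\<And>n G u. labeled_graph n G \<Longrightarrow> u \<in> {1..n} \<Longrightarrow> KC U (E n G) (unary n) \<le> length (degree_description n G u) + c"
  using KC_le_decoder[OF assms computable_degree_decoder] degree_decoder_correct by metis

lemma KC_E_le_routing_description:
  assumes "universal U"
  obtains c :: nat where "\<And>n G R u \<sigma> m q. labeled_graph n G \<Longrightarrow> full_info_sp_scheme n G R \<Longrightarrow> u \<in> {1..n} \<Longrightarrow>
    m \<le> n \<Longrightarrow> (\<And>l. l < m \<Longrightarrow> \<sigma> l \<in> {1..n}) \<Longrightarrow> (\<And>w. adj G u w \<Longrightarrow> \<exists>l<m. \<sigma> l = w) \<Longrightarrow>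
    U q (node_info n G u) = Some (listed_table n R u \<sigma> m) \<Longrightarrow>
    KC U (E n G) (unary n) \<le> length (routing_description n G u \<sigma> m q) + c"
proof -
  obtain c where c: "\<And>p y x q z t. routing_subprogram (bcode p) (bcode y) = bcode q \<Longrightarrow>
      routing_condition (bcode p) (bcode y) = bcode z \<Longrightarrow> U q z = Some t \<Longrightarrow>
      routing_decoder (bcode t) (bcode p) (bcode y) = bcode x \<Longrightarrow> KC U x y \<le> length p + c"
    using KC_le_decoder_subprogram[OF assms computable_routing_decoder computable_routing_subprogram
        computable_routing_condition] by blast
  show ?thesis
  proof (rule that[of c])
    fix n G R u \<sigma> m q
    assume G: "labeled_graph n G" and R: "full_info_sp_scheme n G R" and u: "u \<in> {1..n}" and m: "m \<le> n"
      and \<sigma>: "\<And>l. l < m \<Longrightarrow> \<sigma> l \<in> {1..n}" and cover: "\<And>w. adj G u w \<Longrightarrow> \<exists>l<m. \<sigma> l = w"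
      and q: "U q (node_info n G u) = Some (listed_table n R u \<sigma> m)"
    have "routing_subprogram (bcode (routing_description n G u \<sigma> m q)) (bcode (unary n)) = bcode q"
      by (rule routing_subprogram_correct) (use u m \<sigma> in auto)
    moreover have "routing_condition (bcode (routing_description n G u \<sigma> m q)) (bcode (unary n))
        = bcode (node_info n G u)"
      by (rule routing_condition_correct) (use u m \<sigma> in auto)
    moreover have "routing_decoder (bcode (listed_table n R u \<sigma> m)) (bcode (routing_description n G u \<sigma> m q))
        (bcode (unary n)) = bcode (E n G)"
      by (rule routing_decoder_correct) (use u m \<sigma> G R cover in auto)
    ultimately show "KC U (E n G) (unary n) \<le> length (routing_description n G u \<sigma> m q) + c"
      using c q by blast
  qed
qed

lemma degree_near_half:
  assumes "universal U"
  obtains c :: nat where "\<And>n G u. random_graph U \<delta> n G \<Longrightarrow> u \<in> {1..n} \<Longrightarrow>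
    (real (card (nbrs G u)) - real (n - 1) / 2)\<^sup>2 \<le> real (n - 1) * (\<delta> n + 2 * real (bit_width n) + c) / 2"
proof -
  obtain c where c: "\<And>n G u. labeled_graph n G \<Longrightarrow> u \<in> {1..n} \<Longrightarrow>
      KC U (E n G) (unary n) \<le> length (degree_description n G u) + c"
    using KC_E_le_degree_description[OF assms] by blast
  show ?thesis
  proof (rule that[of "c + 1"])
    fix n G u assume rg: "random_graph U \<delta> n G" and u: "u \<in> {1..n}"
    then have G: "labeled_graph n G" by (simp add: random_graph_def)
    define D where "D = n - 1"
    define d where "d = card (nbrs G u)"
    define L where "L = ceil_log2 (num_weight_codes D d)"
    define X where "X = \<delta> n + 2 * real (bit_width n) + real (c + 1)"
    have "D \<le> n * (n - 1) div 2"
      unfolding D_def by (cases n) (simp_all add: div_le_mono[of "2 * _" _ 2, simplified])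
    moreover have "real (n * (n - 1) div 2) - \<delta> n \<le> KC U (E n G) (unary n)"
      using rg by (simp add: random_graph_def)
    moreover have "KC U (E n G) (unary n) \<le> 2 * bit_width n + L + (n * (n - 1) div 2 - D) + c"
      using c[OF G u] length_degree_description[OF u] by (simp add: L_def D_def d_def)
    ultimately have DL: "real D - real L + 1 \<le> X"
      unfolding X_def by (simp add: of_nat_diff)
    have dD: "d \<le> D" using nbrs_le[OF G u] by (simp add: d_def D_def)
    show "(real d - real D / 2)\<^sup>2 \<le> real D * X / 2"
      unfolding d_def[symmetric] D_def[symmetric] X_def[symmetric]
    proof (cases "D = 0")
      case False
      then have "2 * (real d - real D / 2)\<^sup>2 / real D \<le> X"
        using ceil_log2_num_weight_codes_le[OF _ dD] DL by (fastforce simp: L_def)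
      then show ?thesis using False by (simp add: field_simps)
    qed (use dD in simp)
  qed
qed

lemma cut_pairs_le:
  assumes "labeled_graph n G" "u \<in> {1..n}"
  shows "card (nbrs G u) * (n - 1 - card (nbrs G u)) \<le> n * (n - 1) div 2"
proof -
  have "card {(i, j) \<in> set (pairs_lex n). cut_pair G u i j} \<le> card (set (pairs_lex n))"
    by (rule card_mono) auto
  then show ?thesis unfolding card_cut_pairs[OF assms] card_pairs_lex .
qed

lemma listed_table_KC_ge_cut:
  assumes "universal U"
  obtains c :: nat where "\<And>n G R u \<sigma> m. random_graph U \<delta> n G \<Longrightarrow> full_info_sp_scheme n G R \<Longrightarrow> u \<in> {1..n} \<Longrightarrow>
    m \<le> n \<Longrightarrow> (\<And>l. l < m \<Longrightarrow> \<sigma> l \<in> {1..n}) \<Longrightarrow> (\<And>w. adj G u w \<Longrightarrow> \<exists>l<m. \<sigma> l = w) \<Longrightarrow>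
    real (card (nbrs G u) * (n - 1 - card (nbrs G u))) - \<delta> n - 2 * real (bit_width n) - 2 * real n
      - real m * real (bit_width n) - c \<le> real (KC U (listed_table n R u \<sigma> m) (node_info n G u))"
proof -
  obtain c where c: "\<And>n G R u \<sigma> m q. labeled_graph n G \<Longrightarrow> full_info_sp_scheme n G R \<Longrightarrow> u \<in> {1..n} \<Longrightarrow>
      m \<le> n \<Longrightarrow> (\<And>l. l < m \<Longrightarrow> \<sigma> l \<in> {1..n}) \<Longrightarrow> (\<And>w. adj G u w \<Longrightarrow> \<exists>l<m. \<sigma> l = w) \<Longrightarrow>
      U q (node_info n G u) = Some (listed_table n R u \<sigma> m) \<Longrightarrow>
      KC U (E n G) (unary n) \<le> length (routing_description n G u \<sigma> m q) + c"
    using KC_E_le_routing_description[OF assms] by blast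
  show ?thesis
  proof (rule that[of c])
    fix n G R u \<sigma> m
    assume rg: "random_graph U \<delta> n G" and R: "full_info_sp_scheme n G R" and u: "u \<in> {1..n}"
      and m: "m \<le> n" and \<sigma>: "\<And>l. l < m \<Longrightarrow> \<sigma> l \<in> {1..n}" and cover: "\<And>w. adj G u w \<Longrightarrow> \<exists>l<m. \<sigma> l = w"
    have G: "labeled_graph n G" using rg by (simp add: random_graph_def)
    define K where "K = KC U (listed_table n R u \<sigma> m) (node_info n G u)"
    define cut where "cut = card (nbrs G u) * (n - 1 - card (nbrs G u))"
    define N where "N = n * (n - 1) div 2"
    obtain q where q: "U q (node_info n G u) = Some (listed_table n R u \<sigma> m)" "length q = K"
      using KC_attained universal_surj[OF assms] unfolding K_def by metis
    have "KC U (E n G) (unary n) \<le> 2 * bit_width n + 2 * n + m * bit_width n + (N - cut) + K + c"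
      using c[OF G R u m \<sigma> cover q(1)] by (simp add: length_routing_description[OF G u] q(2) cut_def N_def)
    then have "real (KC U (E n G) (unary n))
        \<le> real (2 * bit_width n + 2 * n + m * bit_width n + (N - cut) + K + c)"
      by (simp only: of_nat_le_iff)
    also have "\<dots> = 2 * real (bit_width n) + 2 * real n + real m * real (bit_width n) + (real N - real cut)
        + real K + real c"
      using cut_pairs_le[OF G u] by (simp add: of_nat_diff cut_def N_def)
    moreover have "real N - \<delta> n \<le> KC U (E n G) (unary n)"
      using rg by (simp add: random_graph_def N_def)
    ultimately show "real cut - \<delta> n - 2 * real (bit_width n) - 2 * real n - real m * real (bit_width n) - c \<le> real K"
      by simp
  qed
qed

lemma bit_width_smallo: "(\<lambda>n. real (bit_width n)) \<in> o(\<lambda>n. real n)"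
proof (rule landau_o.big_small_trans)
  have "real (bit_width n) \<le> log 2 (real n) + 1" if "n \<ge> 1" for n
  proof (cases "bit_width n = 0")
    case False
    then have "real (2 ^ (bit_width n - 1)) \<le> real n"
      using bit_width_minimal[of n] of_nat_mono by blast
    then have "(2::real) ^ (bit_width n - 1) \<le> real n" by simp
    then have "log 2 ((2::real) ^ (bit_width n - 1)) \<le> log 2 (real n)"
      using that by (subst log_le_cancel_iff) auto
    then have "real (bit_width n - 1) \<le> log 2 (real n)" by (simp add: log_nat_power)
    then show ?thesis by linarith
  qed (use that in simp)
  then show "(\<lambda>n. real (bit_width n)) \<in> O(\<lambda>n. log 2 (real n) + 1)"
    by (intro bigoI[where c=1] eventually_mono[OF eventually_ge_at_top[of 1]]) auto
  show "(\<lambda>n. log 2 (real n) + 1) \<in> o(\<lambda>n. real n)" by real_asymp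
qed

lemma linear_mult_smallo:
  assumes "Y \<in> o(\<lambda>n. real n)"
  shows "(\<lambda>n. (real n + 1) * Y n) \<in> o(\<lambda>n::nat. real n ^ 2)"
proof -
  have "(\<lambda>n. real n + 1) \<in> O(\<lambda>n. real n)" by real_asymp
  with assms have "(\<lambda>n. Y n * (real n + 1)) \<in> o(\<lambda>n. real n * real n)"
    by (rule landau_o.small_big_mult)
  then show ?thesis by (simp add: power2_eq_square mult.commute)
qed

lemma balanced_cut_lower_bound:
  fixes n d D W \<delta> K c1 c2 m :: real
  assumes D: "D = n - 1" "0 \<le> D" and m: "m \<le> n" and nonneg: "0 \<le> W" "0 \<le> c1" "0 \<le> c2"
    and dev: "(d - D / 2)\<^sup>2 \<le> D * (\<delta> + 2 * W + c1) / 2"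
    and cut: "d * (D - d) - \<delta> - 2 * W - 2 * n - m * W - c2 \<le> K"
  shows "n\<^sup>2 / 4 - (n + 1) * (\<bar>\<delta>\<bar> + 2 * W + (c1 + c2 + 3)) \<le> K"
proof -
  have "D * (\<delta> + 2 * W + c1) \<le> D * (\<bar>\<delta>\<bar> + 2 * W + c1)"
    using D by (intro mult_left_mono) auto
  also have "\<dots> \<le> n * (\<bar>\<delta>\<bar> + 2 * W + c1)"
    using D nonneg by (intro mult_right_mono) auto
  also have "\<dots> = n * \<bar>\<delta>\<bar> + 2 * (n * W) + n * c1" by (simp add: algebra_simps)
  finally have "(d - D / 2)\<^sup>2 \<le> n * \<bar>\<delta>\<bar> / 2 + n * W + n * c1 / 2"
    using dev by linarith
  moreover have "d * (D - d) = n\<^sup>2 / 4 - n / 2 + 1 / 4 - (d - D / 2)\<^sup>2"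
    unfolding D(1) by (simp add: power2_eq_square field_simps)
  moreover have "(n + 1) * (\<bar>\<delta>\<bar> + 2 * W + (c1 + c2 + 3))
      = n * \<bar>\<delta>\<bar> + 2 * (n * W) + n * c1 + n * c2 + 3 * n + \<bar>\<delta>\<bar> + 2 * W + c1 + c2 + 3"
    by (simp add: algebra_simps)
  moreover have "m * W \<le> n * W" using m nonneg by (intro mult_right_mono)
  moreover have "0 \<le> n * \<bar>\<delta>\<bar>" "0 \<le> n * c1" "0 \<le> n * c2" "\<delta> \<le> \<bar>\<delta>\<bar>" using D nonneg by simp_all
  ultimately show ?thesis using cut D nonneg by linarith
qed

lemma listed_table_KC_lower_bound:
  assumes U: "universal U" and \<delta>: "\<delta> \<in> o(\<lambda>n. real n)"
  obtains \<beta> :: "nat \<Rightarrow> real" where "\<beta> \<in> o(\<lambda>n. real n ^ 2)"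
    and "\<And>n G R u \<sigma> m. random_graph U \<delta> n G \<Longrightarrow> full_info_sp_scheme n G R \<Longrightarrow> u \<in> {1..n} \<Longrightarrow>
      m \<le> n \<Longrightarrow> (\<And>l. l < m \<Longrightarrow> \<sigma> l \<in> {1..n}) \<Longrightarrow> (\<And>w. adj G u w \<Longrightarrow> \<exists>l<m. \<sigma> l = w) \<Longrightarrow>
      real n ^ 2 / 4 - \<beta> n \<le> real (KC U (listed_table n R u \<sigma> m) (node_info n G u))"
proof -
  obtain c1 :: nat where c1: "\<And>n G u. random_graph U \<delta> n G \<Longrightarrow> u \<in> {1..n} \<Longrightarrow>
      (real (card (nbrs G u)) - real (n - 1) / 2)\<^sup>2 \<le> real (n - 1) * (\<delta> n + 2 * real (bit_width n) + real c1) / 2"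
    using degree_near_half[OF U] by blast
  obtain c2 :: nat where c2: "\<And>n G R u \<sigma> m. random_graph U \<delta> n G \<Longrightarrow> full_info_sp_scheme n G R \<Longrightarrow> u \<in> {1..n} \<Longrightarrow>
      m \<le> n \<Longrightarrow> (\<And>l. l < m \<Longrightarrow> \<sigma> l \<in> {1..n}) \<Longrightarrow> (\<And>w. adj G u w \<Longrightarrow> \<exists>l<m. \<sigma> l = w) \<Longrightarrow>
      real (card (nbrs G u) * (n - 1 - card (nbrs G u))) - \<delta> n - 2 * real (bit_width n) - 2 * real n
        - real m * real (bit_width n) - real c2 \<le> real (KC U (listed_table n R u \<sigma> m) (node_info n G u))"
    using listed_table_KC_ge_cut[OF U] by blast
  define C where "C = real c1 + real c2 + 3"
  define Y where "Y n = \<bar>\<delta> n\<bar> + 2 * real (bit_width n) + C" for n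
  have "(\<lambda>_::nat. 1::real) \<in> o(\<lambda>n. real n)" by real_asymp
  moreover have "C \<noteq> 0" unfolding C_def by linarith
  ultimately have "(\<lambda>_::nat. C) \<in> o(\<lambda>n. real n)"
    using landau_o.small.cmult_in_iff[of C "\<lambda>_. 1"] by simp
  then have "Y \<in> o(\<lambda>n. real n)"
    unfolding Y_def using \<delta> bit_width_smallo by (intro sum_in_smallo) simp_all
  then show ?thesis
  proof (rule that[OF linear_mult_smallo])
    fix n G R u \<sigma> m
    assume rg: "random_graph U \<delta> n G" and R: "full_info_sp_scheme n G R" and u: "u \<in> {1..n}"
      and m: "m \<le> n" and \<sigma>: "\<And>l. l < m \<Longrightarrow> \<sigma> l \<in> {1..n}" and cover: "\<And>w. adj G u w \<Longrightarrow> \<exists>l<m. \<sigma> l = w"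
    have G: "labeled_graph n G" using rg by (simp add: random_graph_def)
    have "real (n - 1 - card (nbrs G u)) = real (n - 1) - real (card (nbrs G u))"
      using nbrs_le[OF G u] by (simp add: of_nat_diff)
    then show "real n ^ 2 / 4 - (real n + 1) * Y n \<le> real (KC U (listed_table n R u \<sigma> m) (node_info n G u))"
      unfolding Y_def C_def power2_eq_square[symmetric] using u m c1[OF rg u] c2[OF rg R u m \<sigma> cover]
      by (intro balanced_cut_lower_bound[where D="real (n - 1)" and d="real (card (nbrs G u))"])
        (auto simp: of_nat_diff)
  qed
qed

lemma nbrs_listed_by_Suc: "labeled_graph n G \<Longrightarrow> adj G u w \<Longrightarrow> \<exists>l<n. Suc l = w"
  by (drule labeled_graph_adj) (auto intro!: exI[of _ "w - 1"])

lemma nbrs_listed_by_ports: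
  assumes "labeled_graph n G" "bij_betw \<pi> {0..<card (nbrs G u)} (nbrs G u)"
  shows "l < card (nbrs G u) \<Longrightarrow> \<pi> l \<in> {1..n}" and "adj G u w \<Longrightarrow> \<exists>l<card (nbrs G u). \<pi> l = w"
proof -
  show "\<pi> l \<in> {1..n}" if "l < card (nbrs G u)"
    using bij_betw_apply[OF assms(2), of l] labeled_graph_nbrs[OF assms(1), of u] that by auto
  show "\<exists>l<card (nbrs G u). \<pi> l = w" if "adj G u w"
  proof -
    have "w \<in> \<pi> ` {0..<card (nbrs G u)}"
      using bij_betw_imp_surj_on[OF assms(2)] that by (simp add: nbrs_def)
    then show ?thesis by auto
  qed
qed

lemma routing_tables_KC_lower_bound:
  assumes "universal U" and "\<delta> \<in> o(\<lambda>n. real n)"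
  obtains \<beta> :: "nat \<Rightarrow> real" where "\<beta> \<in> o(\<lambda>n. real n ^ 2)"
    and "\<And>n G R u. random_graph U \<delta> n G \<Longrightarrow> full_info_sp_scheme n G R \<Longrightarrow> u \<in> {1..n} \<Longrightarrow>
      real n ^ 2 / 4 - \<beta> n \<le> real (KC U (rt_table n R u) (node_info n G u))"
    and "\<And>n G R u \<pi>. random_graph U \<delta> n G \<Longrightarrow> full_info_sp_scheme n G R \<Longrightarrow> u \<in> {1..n} \<Longrightarrow>
      bij_betw \<pi> {0..<card (nbrs G u)} (nbrs G u) \<Longrightarrow>
      real n ^ 2 / 4 - \<beta> n \<le> real (KC U (port_table n R u (card (nbrs G u)) \<pi>) (node_info n G u))"
proof -
  obtain \<beta> where \<beta>: "\<beta> \<in> o(\<lambda>n. real n ^ 2)"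
    and bound: "\<And>n G R u \<sigma> m. random_graph U \<delta> n G \<Longrightarrow> full_info_sp_scheme n G R \<Longrightarrow> u \<in> {1..n} \<Longrightarrow>
      m \<le> n \<Longrightarrow> (\<And>l. l < m \<Longrightarrow> \<sigma> l \<in> {1..n}) \<Longrightarrow> (\<And>w. adj G u w \<Longrightarrow> \<exists>l<m. \<sigma> l = w) \<Longrightarrow>
      real n ^ 2 / 4 - \<beta> n \<le> real (KC U (listed_table n R u \<sigma> m) (node_info n G u))"
    using listed_table_KC_lower_bound[OF assms] by blast
  show ?thesis
  proof (rule that[OF \<beta>])
    fix n G R u assume "random_graph U \<delta> n G" "full_info_sp_scheme n G R" "u \<in> {1..n}"
    then show "real n ^ 2 / 4 - \<beta> n \<le> real (KC U (rt_table n R u) (node_info n G u))"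
      unfolding rt_table_eq_listed_table by (intro bound) (auto simp: random_graph_def nbrs_listed_by_Suc)
  next
    fix n G R u \<pi>
    assume h: "random_graph U \<delta> n G" "full_info_sp_scheme n G R" "u \<in> {1..n}"
      "bij_betw \<pi> {0..<card (nbrs G u)} (nbrs G u)"
    then have G: "labeled_graph n G" by (simp add: random_graph_def)
    show "real n ^ 2 / 4 - \<beta> n \<le> real (KC U (port_table n R u (card (nbrs G u)) \<pi>) (node_info n G u))"
      unfolding port_table_eq_listed_table
      by (rule bound) (use h nbrs_le[OF G h(3)] nbrs_listed_by_ports[OF G h(4)] in auto)
  qed
qed

theorem theorem12:
  fixes U :: "bool list \<Rightarrow> bool list \<Rightarrow> bool list option"
    and \<delta> :: "nat \<Rightarrow> real"
  assumes "universal U"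
    and "\<delta> \<in> o(\<lambda>n. real n)"
  shows "\<exists>\<epsilon> \<epsilon>' :: nat \<Rightarrow> real. \<epsilon> \<in> o(\<lambda>n. real n ^ 2) \<and> \<epsilon>' \<in> o(\<lambda>n. real n ^ 3) \<and>
    (\<forall>n G R. random_graph U \<delta> n G \<and> full_info_sp_scheme n G R \<longrightarrow>
       (\<forall>u\<in>{1..n}.
          real (KC U (rt_table n R u) (node_info n G u)) \<ge> real n ^ 2 / 4 - \<epsilon> n \<and>
          (\<forall>\<pi>. bij_betw \<pi> {0..<card (nbrs G u)} (nbrs G u) \<longrightarrow>
             real (KC U (port_table n R u (card (nbrs G u)) \<pi>) (node_info n G u))
               \<ge> real n ^ 2 / 4 - \<epsilon> n)) \<and>
       (\<Sum>u=1..n. real (KC U (rt_table n R u) (node_info n G u))) \<ge> real n ^ 3 / 4 - \<epsilon>' n)"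
proof -
  obtain \<beta> where \<beta>: "\<beta> \<in> o(\<lambda>n. real n ^ 2)"
    and rt: "\<And>n G R u. random_graph U \<delta> n G \<Longrightarrow> full_info_sp_scheme n G R \<Longrightarrow> u \<in> {1..n} \<Longrightarrow>
      real n ^ 2 / 4 - \<beta> n \<le> real (KC U (rt_table n R u) (node_info n G u))"
    and port: "\<And>n G R u \<pi>. random_graph U \<delta> n G \<Longrightarrow> full_info_sp_scheme n G R \<Longrightarrow> u \<in> {1..n} \<Longrightarrow>
      bij_betw \<pi> {0..<card (nbrs G u)} (nbrs G u) \<Longrightarrow>
      real n ^ 2 / 4 - \<beta> n \<le> real (KC U (port_table n R u (card (nbrs G u)) \<pi>) (node_info n G u))"
    using routing_tables_KC_lower_bound[OF assms] by blast
  have "(\<lambda>n. real n * \<beta> n) \<in> o(\<lambda>n. real n * real n ^ 2)"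
    by (rule landau_o.big_small_mult[OF _ \<beta>]) simp
  then have "(\<lambda>n. real n * \<beta> n) \<in> o(\<lambda>n. real n ^ 3)"
    by (simp add: power3_eq_cube power2_eq_square mult.assoc)
  moreover have "(\<Sum>u=1..n. real (KC U (rt_table n R u) (node_info n G u))) \<ge> real n ^ 3 / 4 - real n * \<beta> n"
    if "random_graph U \<delta> n G" "full_info_sp_scheme n G R" for n G R
    using sum_mono[of "{1..n}" "\<lambda>_. real n ^ 2 / 4 - \<beta> n"] rt[OF that]
    by (simp add: power2_eq_square power3_eq_cube algebra_simps)
  ultimately show ?thesis using \<beta> rt port by blast
qed

end
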